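(* Let $(\mathfrak H_{-,+},\mathfrak H,G,W)$ be a reduction tuple for $A^*$, and let $G':\mathrm{Gr}A^*\to\mathfrak H_{-,+}$, $G'\{f,A^*f\}:=Gf$. Then: (i) $G'$ is closed and bounded (with $\mathrm{Gr}A^*$ carrying the graph norm). (ii) For every $c\in\mathbb C$ with $|c|=1$, $(\mathfrak H_{+,-},\mathfrak H,cWG,-W^{-1})$ is a reduction tuple for $A^*$ (with the roles of $\mathfrak H_{-,+}$ and $\mathfrak H_{+,-}$ interchanged). (iii) $\mathrm{Gr}A=\ker G'$, $\mathrm{dom}A=\ker G$, and $W^\#=-W$.
   Context: $A$ is a closed densely defined symmetric operator in a Hilbert space $\mathfrak X$; $\mathrm{Gr}A^*$ and $\mathrm{dom}A^*$ carry graph norms. $\mathfrak H$, $\mathfrak H_{-,+}$, $\mathfrak H_{+,-}$ are Hilbert spaces forming a mixed-order duality: $\widetilde{\mathfrak H}_{\mp,\pm}:=\mathfrak H\cap\mathfrak H_{\mp,\pm}$ is dense in $\mathfrak H$ and in $\mathfrak H_{\mp,\pm}$, the forms $\|h\|^2_{\mathfrak H_{\mp,\pm}}$ on $\widetilde{\mathfrak H}_{\mp,\pm}$ are closed in $\mathfrak H$, and $\|h\|_{\mathfrak H_{\pm,\mp}}=\sup_{0\ne g\in\widetilde{\mathfrak H}_{\mp,\pm}}|(g|h)_{\mathfrak H}|/\|g\|_{\mathfrak H_{\mp,\pm}}$ for $h\in\widetilde{\mathfrak H}_{\pm,\mp}$. The $\mathfrak H$-pairing $\langle\cdot|\cdot\rangle_{\mathfrak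 H}$ is the unique bounded sesquilinear extension of $(\cdot|\cdot)_{\mathfrak H}$ from $\widetilde{\mathfrak H}_{-,+}\times\widetilde{\mathfrak H}_{+,-}$ to $\mathfrak H_{-,+}\times\mathfrak H_{+,-}$, together with $\langle h_{+,-}|h_{-,+}\rangle_{\mathfrak H}:=\overline{\langle h_{-,+}|h_{+,-}\rangle_{\mathfrak H}}$. A reduction tuple $(\mathfrak H_{-,+},\mathfrak H,G,W)$ for $A^*$: (R1) $G:\mathrm{dom}A^*\to\mathfrak H_{-,+}$ is a linear surjection; (R2) $W$ is a linear homeomorphism of $\mathfrak H_{-,+}$ onto $\mathfrak H_{+,-}$; (R3) $(A^*f|g)_{\mathfrak X}-(f|A^*g)_{\mathfrak X}=\langle Gf|WGg\rangle_{\mathfrak H}$ for all $f,g\in\mathrm{dom}A^*$. (The analogous definition with $\mathfrak H_{-,+}$ and $\mathfrak H_{+,-}$ interchanged is used in (ii).) For $W:\mathfrak H_{-,+}\to\mathfrak H_{+,-}$, $W^\#:\mathfrak H_{-,+}\to\mathfrak H_{+,-}$ is the operator determined by $\langle Wf|g\rangle_{\mathfrak H}=\langle f|W^\#g\rangle_{\mathfrak H}$ for all $f,g\in\mathfrak H_{-,+}$. *)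

theory Defs
  imports Complex_Main
begin

text \<open>Complex Hilbert spaces are modelled as carrier subsets of an ambient complex
vector space (scalar multiplication sc, assumed to satisfy vector_space sc), together
with a sesquilinear form (antilinear in the first, linear in the second argument).\<close>

definition sesq_on :: "(complex \<Rightarrow> 'a::plus \<Rightarrow> 'a) \<Rightarrow> 'a set \<Rightarrow> 'a set \<Rightarrow> ('a \<Rightarrow> 'a \<Rightarrow> complex) \<Rightarrow> bool" where
  "sesq_on sc S T p \<longleftrightarrow>
     (\<forall>x\<in>S. \<forall>y\<in>T. \<forall>z\<in>T. \<forall>c. p x (y + z) = p x y + p x z \<and> p x (sc c y) = c * p x y) \<and>
     (\<forall>x\<in>S. \<forall>z\<in>S. \<forall>y\<in>T. \<forall>c. p (x + z) y = p x y + p z y \<and> p (sc c x) y = cnj c * p x y)"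

definition ip_norm :: "('a::type \<Rightarrow> 'a \<Rightarrow> complex) \<Rightarrow> 'a \<Rightarrow> real" where
  "ip_norm ip x = sqrt (Re (ip x x))"

definition hilbert_space :: "(complex \<Rightarrow> 'a::ab_group_add \<Rightarrow> 'a) \<Rightarrow> 'a set \<Rightarrow> ('a \<Rightarrow> 'a \<Rightarrow> complex) \<Rightarrow> bool" where
  "hilbert_space sc S ip \<longleftrightarrow>
     module.subspace sc S \<and> sesq_on sc S S ip \<and>
     (\<forall>x\<in>S. \<forall>y\<in>S. ip y x = cnj (ip x y)) \<and>
     (\<forall>x\<in>S. Im (ip x x) = 0 \<and> Re (ip x x) \<ge> 0 \<and> (ip x x = 0 \<longrightarrow> x = 0)) \<and>
     (\<forall>s. (\<forall>n. s n \<in> S) \<and> (\<forall>e>0. \<exists>N. \<forall>m\<ge>N. \<forall>n\<ge>N. ip_norm ip (s m - s n) < e)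
          \<longrightarrow> (\<exists>l\<in>S. (\<lambda>n. ip_norm ip (s n - l)) \<longlonglongrightarrow> 0))"

definition dense_in :: "'a::ab_group_add set \<Rightarrow> ('a \<Rightarrow> 'a \<Rightarrow> complex) \<Rightarrow> 'a set \<Rightarrow> bool" where
  "dense_in S ip D \<longleftrightarrow> D \<subseteq> S \<and> (\<forall>x\<in>S. \<forall>e>0. \<exists>d\<in>D. ip_norm ip (x - d) < e)"

definition closed_form_in :: "'a::ab_group_add set \<Rightarrow> ('a \<Rightarrow> 'a \<Rightarrow> complex) \<Rightarrow> 'a set \<Rightarrow> ('a \<Rightarrow> real) \<Rightarrow> bool" where
  "closed_form_in H ip D q \<longleftrightarrow>
     (\<forall>s x. (\<forall>n. s n \<in> D) \<and> x \<in> H \<and> (\<lambda>n. ip_norm ip (s n - x)) \<longlonglongrightarrow> 0 \<and>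
            (\<forall>e>0. \<exists>N. \<forall>m\<ge>N. \<forall>n\<ge>N. q (s m - s n) < e)
        \<longrightarrow> x \<in> D \<and> (\<lambda>n. q (s n - x)) \<longlonglongrightarrow> 0)"

text \<open>For all h in D2: norm2 h = sup over 0 \<noteq> g in D1 of abs (ipH g h) / norm1 g
 (least upper bound in the nonnegative reals, so that sup of the empty set is 0).\<close>
definition dual_norm_cond :: "('a \<Rightarrow> 'a \<Rightarrow> complex) \<Rightarrow> 'a::zero set \<Rightarrow> ('a \<Rightarrow> 'a \<Rightarrow> complex) \<Rightarrow> 'a set \<Rightarrow> ('a \<Rightarrow> 'a \<Rightarrow> complex) \<Rightarrow> bool" where
  "dual_norm_cond ipH D1 ip1 D2 ip2 \<longleftrightarrow>
     (\<forall>h\<in>D2. (\<forall>g\<in>D1. g \<noteq> 0 \<longrightarrow> cmod (ipH g h) / ip_norm ip1 g \<le> ip_norm ip2 h) \<and>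
             (\<forall>b\<ge>0. (\<forall>g\<in>D1. g \<noteq> 0 \<longrightarrow> cmod (ipH g h) / ip_norm ip1 g \<le> b) \<longrightarrow> ip_norm ip2 h \<le> b))"

text \<open>Mixed-order duality of H, Hmp (= H_{-,+}) and Hpm (= H_{+,-}).\<close>
definition mixed_duality :: "(complex \<Rightarrow> 'a::ab_group_add \<Rightarrow> 'a) \<Rightarrow> 'a set \<Rightarrow> ('a \<Rightarrow> 'a \<Rightarrow> complex) \<Rightarrow>
     'a set \<Rightarrow> ('a \<Rightarrow> 'a \<Rightarrow> complex) \<Rightarrow> 'a set \<Rightarrow> ('a \<Rightarrow> 'a \<Rightarrow> complex) \<Rightarrow> bool" where
  "mixed_duality sc H ipH Hmp ipmp Hpm ippm \<longleftrightarrow>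
     hilbert_space sc H ipH \<and> hilbert_space sc Hmp ipmp \<and> hilbert_space sc Hpm ippm \<and>
     dense_in H ipH (H \<inter> Hmp) \<and> dense_in Hmp ipmp (H \<inter> Hmp) \<and>
     dense_in H ipH (H \<inter> Hpm) \<and> dense_in Hpm ippm (H \<inter> Hpm) \<and>
     closed_form_in H ipH (H \<inter> Hmp) (\<lambda>h. (ip_norm ipmp h)\<^sup>2) \<and>
     closed_form_in H ipH (H \<inter> Hpm) (\<lambda>h. (ip_norm ippm h)\<^sup>2) \<and>
     dual_norm_cond ipH (H \<inter> Hmp) ipmp (H \<inter> Hpm) ippm \<and>
     dual_norm_cond ipH (H \<inter> Hpm) ippm (H \<inter> Hmp) ipmp"

text \<open>p is the H-pairing on Hmp x Hpm: the bounded sesquilinear extension of ipH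
 from (H \<inter> Hmp) x (H \<inter> Hpm). (It is unique by density.) The pairing in the
 reverse order is given by cnj (p b a).\<close>
definition is_H_pairing :: "(complex \<Rightarrow> 'a::ab_group_add \<Rightarrow> 'a) \<Rightarrow> 'a set \<Rightarrow> ('a \<Rightarrow> 'a \<Rightarrow> complex) \<Rightarrow>
     'a set \<Rightarrow> ('a \<Rightarrow> 'a \<Rightarrow> complex) \<Rightarrow> 'a set \<Rightarrow> ('a \<Rightarrow> 'a \<Rightarrow> complex) \<Rightarrow> ('a \<Rightarrow> 'a \<Rightarrow> complex) \<Rightarrow> bool" where
  "is_H_pairing sc H ipH Hmp ipmp Hpm ippm p \<longleftrightarrow>
     sesq_on sc Hmp Hpm p \<and>
     (\<exists>C. \<forall>x\<in>Hmp. \<forall>y\<in>Hpm. cmod (p x y) \<le> C * ip_norm ipmp x * ip_norm ippm y) \<and>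
     (\<forall>g\<in>H \<inter> Hmp. \<forall>h\<in>H \<inter> Hpm. p g h = ipH g h)"

definition lin_on :: "(complex \<Rightarrow> 'a::ab_group_add \<Rightarrow> 'a) \<Rightarrow> (complex \<Rightarrow> 'b::ab_group_add \<Rightarrow> 'b) \<Rightarrow> 'a set \<Rightarrow> ('a \<Rightarrow> 'b) \<Rightarrow> bool" where
  "lin_on sc1 sc2 D T \<longleftrightarrow> module.subspace sc1 D \<and>
     (\<forall>x\<in>D. \<forall>y\<in>D. T (x + y) = T x + T y) \<and> (\<forall>x\<in>D. \<forall>c. T (sc1 c x) = sc2 c (T x))"

definition gr_norm :: "('a \<Rightarrow> 'a \<Rightarrow> complex) \<Rightarrow> 'a \<Rightarrow> 'a \<Rightarrow> real" where
  "gr_norm ip f h = sqrt ((ip_norm ip f)\<^sup>2 + (ip_norm ip h)\<^sup>2)"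

definition graph :: "'a set \<Rightarrow> ('a \<Rightarrow> 'b) \<Rightarrow> ('a \<times> 'b) set" where
  "graph D T = {(f, T f) | f. f \<in> D}"

definition cdd_symmetric :: "(complex \<Rightarrow> 'x::ab_group_add \<Rightarrow> 'x) \<Rightarrow> 'x set \<Rightarrow> ('x \<Rightarrow> 'x \<Rightarrow> complex) \<Rightarrow> 'x set \<Rightarrow> ('x \<Rightarrow> 'x) \<Rightarrow> bool" where
  "cdd_symmetric sc X ip domA A \<longleftrightarrow>
     lin_on sc sc domA A \<and> A ` domA \<subseteq> X \<and> dense_in X ip domA \<and>
     (\<forall>s f h. (\<forall>n. s n \<in> domA) \<and> f \<in> X \<and> h \<in> X \<and>
              (\<lambda>n. gr_norm ip (s n - f) (A (s n) - h)) \<longlonglongrightarrow> 0 \<longrightarrow> f \<in> domA \<and> A f = h) \<and>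
     (\<forall>f\<in>domA. \<forall>g\<in>domA. ip (A f) g = ip f (A g))"

definition adj_dom :: "'x set \<Rightarrow> ('x \<Rightarrow> 'x \<Rightarrow> complex) \<Rightarrow> 'x set \<Rightarrow> ('x \<Rightarrow> 'x) \<Rightarrow> 'x set" where
  "adj_dom X ip domA A = {g \<in> X. \<exists>h\<in>X. \<forall>f\<in>domA. ip (A f) g = ip f h}"

definition adj :: "'x set \<Rightarrow> ('x \<Rightarrow> 'x \<Rightarrow> complex) \<Rightarrow> 'x set \<Rightarrow> ('x \<Rightarrow> 'x) \<Rightarrow> 'x \<Rightarrow> 'x" where
  "adj X ip domA A g = (THE h. h \<in> X \<and> (\<forall>f\<in>domA. ip (A f) g = ip f h))"

definition continuous_betw :: "'a::ab_group_add set \<Rightarrow> ('a \<Rightarrow> 'a \<Rightarrow> complex) \<Rightarrow> 'b::ab_group_add set \<Rightarrow> ('b \<Rightarrow> 'b \<Rightarrow> complex) \<Rightarrow> ('a \<Rightarrow> 'b) \<Rightarrow> bool" where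
  "continuous_betw S ipS T ipT F \<longleftrightarrow>
     (\<forall>x\<in>S. \<forall>e>0. \<exists>d>0. \<forall>y\<in>S. ip_norm ipS (y - x) < d \<longrightarrow> ip_norm ipT (F y - F x) < e)"

definition lin_homeo :: "(complex \<Rightarrow> 'a::ab_group_add \<Rightarrow> 'a) \<Rightarrow> 'a set \<Rightarrow> ('a \<Rightarrow> 'a \<Rightarrow> complex) \<Rightarrow> 'a set \<Rightarrow> ('a \<Rightarrow> 'a \<Rightarrow> complex) \<Rightarrow> ('a \<Rightarrow> 'a) \<Rightarrow> bool" where
  "lin_homeo sc S ipS T ipT W \<longleftrightarrow>
     lin_on sc sc S W \<and> bij_betw W S T \<and> continuous_betw S ipS T ipT W \<and>
     continuous_betw T ipT S ipS (inv_into S W)"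

text \<open>Reduction tuple (S, H, G, W) for A*, where S is the range space of G, T the range of W,
 and p the pairing of S x T used in (R3).\<close>
definition reduction_tuple :: "(complex \<Rightarrow> 'x::ab_group_add \<Rightarrow> 'x) \<Rightarrow> 'x set \<Rightarrow> ('x \<Rightarrow> 'x \<Rightarrow> complex) \<Rightarrow> 'x set \<Rightarrow> ('x \<Rightarrow> 'x) \<Rightarrow>
     (complex \<Rightarrow> 'h::ab_group_add \<Rightarrow> 'h) \<Rightarrow> 'h set \<Rightarrow> ('h \<Rightarrow> 'h \<Rightarrow> complex) \<Rightarrow> 'h set \<Rightarrow> ('h \<Rightarrow> 'h \<Rightarrow> complex) \<Rightarrow>
     ('h \<Rightarrow> 'h \<Rightarrow> complex) \<Rightarrow> ('x \<Rightarrow> 'h) \<Rightarrow> ('h \<Rightarrow> 'h) \<Rightarrow> bool" where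
  "reduction_tuple scX X ipX domA A sc S ipS T ipT p G W \<longleftrightarrow>
     lin_on scX sc (adj_dom X ipX domA A) G \<and> G ` (adj_dom X ipX domA A) = S \<and>
     lin_homeo sc S ipS T ipT W \<and>
     (\<forall>f\<in>adj_dom X ipX domA A. \<forall>g\<in>adj_dom X ipX domA A.
        ipX (adj X ipX domA A f) g - ipX f (adj X ipX domA A g) = p (G f) (W (G g)))"

definition closed_op :: "'a set \<Rightarrow> ('a \<Rightarrow> 'a \<Rightarrow> real) \<Rightarrow> 'a set \<Rightarrow> 'b set \<Rightarrow> ('b \<Rightarrow> 'b \<Rightarrow> real) \<Rightarrow> ('a \<Rightarrow> 'b) \<Rightarrow> bool" where
  "closed_op U dU D T dT F \<longleftrightarrow>
     (\<forall>s u y. (\<forall>n. s n \<in> D) \<and> u \<in> U \<and> y \<in> T \<and> (\<lambda>n. dU (s n) u) \<longlonglongrightarrow> 0 \<and> (\<lambda>n. dT (F (s n)) y) \<longlonglongrightarrow> 0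
        \<longrightarrow> u \<in> D \<and> F u = y)"

definition bounded_op :: "'a set \<Rightarrow> ('a \<Rightarrow> real) \<Rightarrow> ('b \<Rightarrow> real) \<Rightarrow> ('a \<Rightarrow> 'b) \<Rightarrow> bool" where
  "bounded_op D nD nT F \<longleftrightarrow> (\<exists>C. \<forall>u\<in>D. nT (F u) \<le> C * nD u)"

text \<open>W^# for W : Hmp \<rightarrow> Hpm: the operator Hmp \<rightarrow> Hpm with
 <W f | g> = <f | W^# g> for f, g in Hmp (the left pairing is the reverse-order one);
 normalised to 0 outside Hmp.\<close>
definition sharp :: "'a::zero set \<Rightarrow> 'a set \<Rightarrow> ('a \<Rightarrow> 'a \<Rightarrow> complex) \<Rightarrow> ('a \<Rightarrow> 'a) \<Rightarrow> 'a \<Rightarrow> 'a" where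
  "sharp Hmp Hpm p W = (THE V. (\<forall>x. x \<notin> Hmp \<longrightarrow> V x = 0) \<and> (\<forall>x\<in>Hmp. V x \<in> Hpm) \<and>
       (\<forall>f\<in>Hmp. \<forall>g\<in>Hmp. cnj (p g (W f)) = p f (V g)))"

end

theory Submission
  imports Defs "HOL-Analysis.Analysis"
begin

text \<open>
  By (R3) the boundary form \<open>(A\<^sup>* f | g) - (f | A\<^sup>* g)\<close> equals \<open>\<langle>G f | W G g\<rangle>\<close>. As \<open>W G\<close>
  maps \<open>dom A\<^sup>*\<close> onto \<open>Hpm\<close> and the pairing is nondegenerate (by the dual-norm identity of
  the mixed-order duality), \<open>G f\<close> is determined by the functional "boundary form against \<open>f\<close>".

  Skew-symmetry of the boundary form gives \<open>W\<^sup># = - W\<close> and, after reversing the pairing,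
  part (ii). \<open>G\<close> vanishes on \<open>dom A\<close>; conversely, if \<open>G f = 0\<close> then \<open>f\<close> is symmetric
  against all of \<open>dom A\<^sup>*\<close>, and projecting \<open>{f, A\<^sup>* f}\<close> onto the closed graph of \<open>A\<close>
  shows \<open>f \<in> dom A\<close>. The boundary form is continuous in the graph norm, which makes \<open>G'\<close>
  closed. For boundedness, the functionals \<open>\<langle>G f | \<cdot>\<rangle>\<close> on the Hilbert space \<open>Hpm\<close>,
  measured against the graph norm of \<open>f\<close>, are pointwise bounded by (R3); the uniform
  boundedness principle (via Baire's theorem) bounds them uniformly, and the dual-norm
  identity turns this into \<open>\<parallel>G f\<parallel> \<le> M \<parallel>{f, A\<^sup>* f}\<parallel>\<close>.
\<close>

section \<open>Sesquilinear forms and Hilbert spaces as carriers\<close>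

locale sesquilinear = vector_space sc for sc :: "complex \<Rightarrow> 'a::ab_group_add \<Rightarrow> 'a" +
  fixes S T :: "'a set" and p :: "'a \<Rightarrow> 'a \<Rightarrow> complex"
  assumes sesq: "sesq_on sc S T p" and subspace_left: "subspace S" and subspace_right: "subspace T"
begin

lemma add_right: "x \<in> S \<Longrightarrow> y \<in> T \<Longrightarrow> z \<in> T \<Longrightarrow> p x (y + z) = p x y + p x z"
  using sesq unfolding sesq_on_def by blast

lemma scale_right: "x \<in> S \<Longrightarrow> y \<in> T \<Longrightarrow> p x (sc c y) = c * p x y"
  using sesq unfolding sesq_on_def by blast

lemma add_left: "x \<in> S \<Longrightarrow> z \<in> S \<Longrightarrow> y \<in> T \<Longrightarrow> p (x + z) y = p x y + p z y"
  using sesq unfolding sesq_on_def by blast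

lemma scale_left: "x \<in> S \<Longrightarrow> y \<in> T \<Longrightarrow> p (sc c x) y = cnj c * p x y"
  using sesq unfolding sesq_on_def by blast

lemma minus_right: "x \<in> S \<Longrightarrow> y \<in> T \<Longrightarrow> p x (- y) = - p x y"
  using scale_right[of x y "-1"] by simp

lemma minus_left: "x \<in> S \<Longrightarrow> y \<in> T \<Longrightarrow> p (- x) y = - p x y"
  using scale_left[of x y "-1"] by simp

lemma diff_right: "x \<in> S \<Longrightarrow> y \<in> T \<Longrightarrow> z \<in> T \<Longrightarrow> p x (y - z) = p x y - p x z"
  using add_right[of x y "- z"] minus_right[of x z] subspace_neg[OF subspace_right] by simp

lemma diff_left: "x \<in> S \<Longrightarrow> z \<in> S \<Longrightarrow> y \<in> T \<Longrightarrow> p (x - z) y = p x y - p z y"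
  using add_left[of x "- z" y] minus_left[of z y] subspace_neg[OF subspace_left] by simp

lemma zero_right: "x \<in> S \<Longrightarrow> p x 0 = 0"
  using scale_right[of x 0 0] subspace_0[OF subspace_right] by simp

lemma zero_left: "y \<in> T \<Longrightarrow> p 0 y = 0"
  using scale_left[of 0 y 0] subspace_0[OF subspace_left] by simp

end

lemma cnj_mult_self: "cnj c * c = complex_of_real ((cmod c)\<^sup>2)"
  by (subst mult.commute) (rule complex_norm_square[symmetric])

locale hilbert_carrier = vector_space sc for sc :: "complex \<Rightarrow> 'a::ab_group_add \<Rightarrow> 'a" +
  fixes S :: "'a set" and ip :: "'a \<Rightarrow> 'a \<Rightarrow> complex"
  assumes hilbert: "hilbert_space sc S ip"
begin

lemma subspace_carrier: "subspace S"
  using hilbert unfolding hilbert_space_def by blast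

sublocale ip: sesquilinear sc S S ip
  using hilbert subspace_carrier unfolding hilbert_space_def by unfold_locales blast+

lemma ip_commute: "x \<in> S \<Longrightarrow> y \<in> S \<Longrightarrow> ip y x = cnj (ip x y)"
  using hilbert unfolding hilbert_space_def by blast

lemma ip_self_pos: "x \<in> S \<Longrightarrow> Im (ip x x) = 0 \<and> Re (ip x x) \<ge> 0 \<and> (ip x x = 0 \<longrightarrow> x = 0)"
  using hilbert unfolding hilbert_space_def by blast

lemma complete:
  "(\<forall>n. s n \<in> S) \<Longrightarrow> (\<forall>e>0. \<exists>N. \<forall>m\<ge>N. \<forall>n\<ge>N. ip_norm ip (s m - s n) < e)
    \<Longrightarrow> \<exists>l\<in>S. (\<lambda>n. ip_norm ip (s n - l)) \<longlonglongrightarrow> 0"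
  using hilbert unfolding hilbert_space_def by blast

lemma mem_add: "x \<in> S \<Longrightarrow> y \<in> S \<Longrightarrow> x + y \<in> S"
  using subspace_carrier subspace_add by blast

lemma mem_diff: "x \<in> S \<Longrightarrow> y \<in> S \<Longrightarrow> x - y \<in> S"
  using subspace_carrier subspace_diff by blast

lemma mem_uminus: "x \<in> S \<Longrightarrow> - x \<in> S"
  using subspace_carrier subspace_neg by blast

lemma mem_scale: "x \<in> S \<Longrightarrow> sc c x \<in> S"
  using subspace_carrier subspace_scale by blast

lemma mem_zero: "0 \<in> S"
  using subspace_carrier subspace_0 by blast

lemma ip_self: "x \<in> S \<Longrightarrow> ip x x = complex_of_real ((ip_norm ip x)\<^sup>2)"
  using ip_self_pos[of x] unfolding ip_norm_def by (simp add: complex_eq_iff)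

lemma ip_norm_nonneg: "x \<in> S \<Longrightarrow> ip_norm ip x \<ge> 0"
  using ip_self_pos[of x] unfolding ip_norm_def by simp

lemma ip_norm_eq_0_iff: "x \<in> S \<Longrightarrow> ip_norm ip x = 0 \<longleftrightarrow> x = 0"
  using ip_self_pos[of x] ip.zero_right[OF mem_zero] unfolding ip_norm_def by (auto simp: complex_eq_iff)

lemma ip_norm_pos: "x \<in> S \<Longrightarrow> x \<noteq> 0 \<Longrightarrow> ip_norm ip x > 0"
  using ip_norm_eq_0_iff ip_norm_nonneg by force

lemma ip_norm_zero [simp]: "ip_norm ip 0 = 0"
  using ip.zero_right[OF mem_zero] unfolding ip_norm_def by simp

lemma ip_norm_scale: "x \<in> S \<Longrightarrow> ip_norm ip (sc c x) = cmod c * ip_norm ip x"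
proof -
  assume x: "x \<in> S"
  have "ip (sc c x) (sc c x) = (cnj c * c) * ip x x"
    using ip.scale_right[OF mem_scale[OF x] x] ip.scale_left[OF x x] by simp
  then have "Re (ip (sc c x) (sc c x)) = (cmod c * ip_norm ip x)\<^sup>2"
    unfolding cnj_mult_self ip_self[OF x] by (simp add: power_mult_distrib)
  then show ?thesis
    using ip_norm_nonneg[OF x] unfolding ip_norm_def[of ip "sc c x"] by simp
qed

lemma ip_norm_minus: "x \<in> S \<Longrightarrow> ip_norm ip (- x) = ip_norm ip x"
  using ip_norm_scale[of x "-1"] by simp

lemma ip_norm_minus_commute: "x \<in> S \<Longrightarrow> y \<in> S \<Longrightarrow> ip_norm ip (x - y) = ip_norm ip (y - x)"
  using ip_norm_minus[OF mem_diff[of y x]] by simp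

lemma ip_norm_diff_scale_squared:
  assumes v: "v \<in> S" and b: "b \<in> S"
  shows "(ip_norm ip (v - sc t b))\<^sup>2
    = (ip_norm ip v)\<^sup>2 - 2 * Re (cnj t * ip b v) + (cmod t)\<^sup>2 * (ip_norm ip b)\<^sup>2"
proof -
  have tb: "sc t b \<in> S" and w: "v - sc t b \<in> S"
    using mem_scale[OF b] mem_diff[OF v mem_scale[OF b]] by auto
  have "ip (v - sc t b) (v - sc t b) = ip v (v - sc t b) - ip (sc t b) (v - sc t b)"
    using ip.diff_left[OF v tb w] .
  also have "ip v (v - sc t b) = ip v v - t * ip v b"
    using ip.diff_right[OF v v tb] ip.scale_right[OF v b] by simp
  also have "ip (sc t b) (v - sc t b) = cnj t * (ip b v - t * ip b b)"
    using ip.scale_left[OF b w] ip.diff_right[OF b v tb] ip.scale_right[OF b b] by simp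
  finally have "ip (v - sc t b) (v - sc t b)
      = ip v v - t * cnj (ip b v) - cnj t * ip b v + (cnj t * t) * ip b b"
    using ip_commute[OF b v] by (simp add: algebra_simps)
  then have "Re (ip (v - sc t b) (v - sc t b))
      = Re (ip v v) - 2 * Re (cnj t * ip b v) + (cmod t)\<^sup>2 * Re (ip b b)"
    unfolding cnj_mult_self ip_self[OF b] by simp
  then show ?thesis
    unfolding ip_self[OF v] ip_self[OF b] ip_self[OF w] by simp
qed

lemma cauchy_schwarz: "x \<in> S \<Longrightarrow> y \<in> S \<Longrightarrow> cmod (ip x y) \<le> ip_norm ip x * ip_norm ip y"
proof (cases "y = 0")
  case True
  assume "x \<in> S"
  then show ?thesis using True ip.zero_right by simp
next
  case False
  assume x: "x \<in> S" and y: "y \<in> S"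
  define a where "a = ip x y"
  have Ny: "ip_norm ip y > 0" using ip_norm_pos[OF y False] .
  define r where "r = (cmod a)\<^sup>2 / (ip_norm ip y)\<^sup>2"
  \<comment> \<open>the norm of \<open>x - t y\<close> is minimal at \<open>t = cnj a / \<parallel>y\<parallel>\<^sup>2\<close>\<close>
  define t where "t = cnj a / complex_of_real ((ip_norm ip y)\<^sup>2)"
  have re: "Re (cnj t * ip y x) = r"
    using ip_commute[OF x y] unfolding t_def r_def a_def[symmetric]
    by (simp add: complex_norm_square[symmetric])
  have ct: "(cmod t)\<^sup>2 * (ip_norm ip y)\<^sup>2 = r"
    using Ny unfolding t_def r_def by (simp add: norm_divide power_divide field_simps del: of_real_power)
  have "0 \<le> (ip_norm ip (x - sc t y))\<^sup>2" by simp
  also have "\<dots> = (ip_norm ip x)\<^sup>2 - r"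
    using ip_norm_diff_scale_squared[OF x y, of t] re ct by simp
  finally have "(cmod a)\<^sup>2 / (ip_norm ip y)\<^sup>2 \<le> (ip_norm ip x)\<^sup>2" unfolding r_def by simp
  then have "(cmod a)\<^sup>2 \<le> (ip_norm ip x * ip_norm ip y)\<^sup>2"
    using Ny by (simp add: field_simps power_mult_distrib)
  then show ?thesis
    unfolding a_def
    by (rule power2_le_imp_le) (simp add: ip_norm_nonneg[OF x] ip_norm_nonneg[OF y])
qed


lemma ip_norm_triangle: "x \<in> S \<Longrightarrow> y \<in> S \<Longrightarrow> ip_norm ip (x + y) \<le> ip_norm ip x + ip_norm ip y"
proof -
  assume x: "x \<in> S" and y: "y \<in> S"
  have xy: "x + y \<in> S" using mem_add[OF x y] .
  have "ip (x + y) (x + y) = ip x x + ip x y + (ip y x + ip y y)"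
    using ip.add_left[OF x y xy] ip.add_right[OF x x y] ip.add_right[OF y x y] by simp
  then have "Re (ip (x + y) (x + y)) = Re (ip x x) + Re (ip y y) + 2 * Re (ip x y)"
    using ip_commute[OF x y] by simp
  also have "Re (ip x y) \<le> ip_norm ip x * ip_norm ip y"
    using cauchy_schwarz[OF x y] complex_Re_le_cmod[of "ip x y"] by linarith
  finally have "(ip_norm ip (x + y))\<^sup>2 \<le> (ip_norm ip x + ip_norm ip y)\<^sup>2"
    using ip_self[OF x] ip_self[OF y] ip_self[OF xy] by (simp add: power2_sum)
  then show ?thesis
    by (rule power2_le_imp_le) (simp add: ip_norm_nonneg[OF x] ip_norm_nonneg[OF y])
qed

lemma ip_norm_triangle_diff:
  "x \<in> S \<Longrightarrow> y \<in> S \<Longrightarrow> z \<in> S \<Longrightarrow> ip_norm ip (x - z) \<le> ip_norm ip (x - y) + ip_norm ip (y - z)"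
  using ip_norm_triangle[OF mem_diff[of x y] mem_diff[of y z]] by simp

lemma ip_norm_reverse_triangle:
  "x \<in> S \<Longrightarrow> y \<in> S \<Longrightarrow> \<bar>ip_norm ip x - ip_norm ip y\<bar> \<le> ip_norm ip (x - y)"
  using ip_norm_triangle_diff[of x y 0] ip_norm_triangle_diff[of y x 0] ip_norm_minus_commute[of x y]
    mem_zero by (simp add: abs_le_iff)

lemma parallelogram:
  assumes u: "u \<in> S" and v: "v \<in> S"
  shows "(ip_norm ip (u + v))\<^sup>2 + (ip_norm ip (u - v))\<^sup>2 = 2 * (ip_norm ip u)\<^sup>2 + 2 * (ip_norm ip v)\<^sup>2"
proof -
  have uv: "u + v \<in> S" "u - v \<in> S" using mem_add[OF u v] mem_diff[OF u v] by auto
  have "ip (u + v) (u + v) + ip (u - v) (u - v) = 2 * ip u u + 2 * ip v v"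
    using ip.add_left[OF u v uv(1)] ip.add_right[OF u u v] ip.add_right[OF v u v]
      ip.diff_left[OF u v uv(2)] ip.diff_right[OF u u v] ip.diff_right[OF v u v] by simp
  then have "Re (ip (u + v) (u + v)) + Re (ip (u - v) (u - v)) = 2 * Re (ip u u) + 2 * Re (ip v v)"
    by (metis plus_complex.sel(1) Re_complex_of_real times_complex.sel(1) mult_2 complex_Re_numeral)
  then show ?thesis using ip_self[OF u] ip_self[OF v] ip_self[OF uv(1)] ip_self[OF uv(2)] by simp
qed

lemma ip_tendsto_right:
  assumes "z \<in> S" "x \<in> S" "\<And>n. s n \<in> S" "(\<lambda>n. ip_norm ip (s n - x)) \<longlonglongrightarrow> 0"
  shows "(\<lambda>n. ip z (s n)) \<longlonglongrightarrow> ip z x"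
proof -
  have "norm (ip z (s n) - ip z x) \<le> ip_norm ip z * ip_norm ip (s n - x)" for n
    using ip.diff_right[of z "s n" x] cauchy_schwarz[of z "s n - x"] mem_diff assms(1-3) by simp
  then have "(\<lambda>n. ip z (s n) - ip z x) \<longlonglongrightarrow> 0"
    by (intro Lim_null_comparison[OF always_eventually tendsto_mult_right_zero[OF assms(4)]]) blast
  then show ?thesis by (rule LIM_zero_cancel)
qed

lemma ip_tendsto_left:
  assumes "z \<in> S" "x \<in> S" "\<And>n. s n \<in> S" "(\<lambda>n. ip_norm ip (s n - x)) \<longlonglongrightarrow> 0"
  shows "(\<lambda>n. ip (s n) z) \<longlonglongrightarrow> ip x z"
proof -
  have "(\<lambda>n. cnj (ip z (s n))) \<longlonglongrightarrow> cnj (ip z x)"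
    using ip_tendsto_right[OF assms] by (rule tendsto_cnj)
  moreover have "ip (s n) z = cnj (ip z (s n))" "ip x z = cnj (ip z x)" for n
    using ip_commute assms(1-3) by blast+
  ultimately show ?thesis by simp
qed

lemma ip_norm_tendsto:
  assumes "x \<in> S" "\<And>n. s n \<in> S" "(\<lambda>n. ip_norm ip (s n - x)) \<longlonglongrightarrow> 0"
  shows "(\<lambda>n. ip_norm ip (s n)) \<longlonglongrightarrow> ip_norm ip x"
proof -
  have "norm (ip_norm ip (s n) - ip_norm ip x) \<le> ip_norm ip (s n - x)" for n
    using ip_norm_reverse_triangle assms(1,2) by simp
  then have "(\<lambda>n. ip_norm ip (s n) - ip_norm ip x) \<longlonglongrightarrow> 0"
    by (intro Lim_null_comparison[OF always_eventually assms(3)]) blast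
  then show ?thesis by (rule LIM_zero_cancel)
qed


section \<open>Uniform boundedness\<close>

text \<open>Outside the carrier \<open>ip_norm\<close> need be neither symmetric nor nonnegative, hence the
 cut-off required by \<open>Metric_space\<close>.\<close>
definition carrier_dist :: "'a \<Rightarrow> 'a \<Rightarrow> real" where
  "carrier_dist k l = (if k \<in> S \<and> l \<in> S then ip_norm ip (k - l) else 0)"

lemma Metric_space_carrier_dist: "Metric_space S carrier_dist"
proof
  show "0 \<le> carrier_dist x y" for x y
    unfolding carrier_dist_def using ip_norm_nonneg mem_diff by auto
  show "carrier_dist x y = carrier_dist y x" for x y
    unfolding carrier_dist_def using ip_norm_minus_commute by auto
  show "x \<in> S \<Longrightarrow> y \<in> S \<Longrightarrow> carrier_dist x y = 0 \<longleftrightarrow> x = y" for x y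
    unfolding carrier_dist_def using ip_norm_eq_0_iff[OF mem_diff[of x y]] by auto
  show "x \<in> S \<Longrightarrow> y \<in> S \<Longrightarrow> z \<in> S \<Longrightarrow> carrier_dist x z \<le> carrier_dist x y + carrier_dist y z" for x y z
    unfolding carrier_dist_def using ip_norm_triangle_diff by auto
qed

interpretation carrier: Metric_space S carrier_dist
  by (rule Metric_space_carrier_dist)

lemma mcomplete_carrier_dist: "carrier.mcomplete"
  unfolding carrier.mcomplete_def carrier.MCauchy_def
proof (intro allI impI, elim conjE)
  fix \<sigma> :: "nat \<Rightarrow> 'a"
  assume "range \<sigma> \<subseteq> S"
    and cauchy: "\<forall>\<epsilon>>0. \<exists>N. \<forall>n n'. N \<le> n \<longrightarrow> N \<le> n' \<longrightarrow> carrier_dist (\<sigma> n) (\<sigma> n') < \<epsilon>"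
  then have \<sigma>: "\<forall>n. \<sigma> n \<in> S" by auto
  obtain l where l: "l \<in> S" "(\<lambda>n. ip_norm ip (\<sigma> n - l)) \<longlonglongrightarrow> 0"
    using complete[OF \<sigma>] cauchy \<sigma> unfolding carrier_dist_def by auto
  have "\<forall>\<^sub>F n in sequentially. \<sigma> n \<in> S \<and> carrier_dist (\<sigma> n) l < e" if "e > 0" for e
    using order_tendstoD(2)[OF l(2) that] by eventually_elim (use \<sigma> l(1) in \<open>simp add: carrier_dist_def\<close>)
  then have "limitin carrier.mtopology \<sigma> l sequentially"
    unfolding carrier.limitin_metric using l(1) by blast
  then show "\<exists>x. limitin carrier.mtopology \<sigma> x sequentially" by blast
qed

lemma closedin_uniformly_bounded:
  fixes \<phi> :: "'i \<Rightarrow> 'a \<Rightarrow> complex" and w :: "'i \<Rightarrow> real"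
  assumes add: "\<And>i k l. i \<in> I \<Longrightarrow> k \<in> S \<Longrightarrow> l \<in> S \<Longrightarrow> \<phi> i (k + l) = \<phi> i k + \<phi> i l"
    and bounded: "\<And>i. i \<in> I \<Longrightarrow> \<exists>C. \<forall>k\<in>S. cmod (\<phi> i k) \<le> C * ip_norm ip k"
  shows "closedin carrier.mtopology {k \<in> S. \<forall>i\<in>I. cmod (\<phi> i k) \<le> B * w i}"
  unfolding carrier.metric_closedin_iff_sequentially_closed
proof (intro conjI allI impI, blast, elim conjE)
  fix \<sigma> l
  assume \<sigma>: "range \<sigma> \<subseteq> {k \<in> S. \<forall>i\<in>I. cmod (\<phi> i k) \<le> B * w i}"
    and lim: "limitin carrier.mtopology \<sigma> l sequentially"
  have l: "l \<in> S" using lim unfolding carrier.limitin_metric by blast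
  have "cmod (\<phi> i l) \<le> B * w i" if i: "i \<in> I" for i
  proof (rule field_le_epsilon)
    fix e :: real assume e: "e > 0"
    obtain C where C: "\<forall>k\<in>S. cmod (\<phi> i k) \<le> C * ip_norm ip k" using bounded[OF i] by blast
    have C1: "\<bar>C\<bar> + 1 > 0" by simp
    have "\<forall>\<^sub>F m in sequentially. \<sigma> m \<in> S \<and> carrier_dist (\<sigma> m) l < e / (\<bar>C\<bar> + 1)"
      using lim e C1 unfolding carrier.limitin_metric by simp
    then obtain m where m: "\<sigma> m \<in> S" "carrier_dist (\<sigma> m) l < e / (\<bar>C\<bar> + 1)"
      using eventually_happens'[OF sequentially_bot] by blast
    have lm: "l - \<sigma> m \<in> S" and dist: "ip_norm ip (l - \<sigma> m) < e / (\<bar>C\<bar> + 1)"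
      using m l mem_diff ip_norm_minus_commute unfolding carrier_dist_def by auto
    have "cmod (\<phi> i (l - \<sigma> m)) \<le> (\<bar>C\<bar> + 1) * ip_norm ip (l - \<sigma> m)"
      using C lm ip_norm_nonneg[OF lm] by (smt (verit, best) mult_right_mono)
    also have "\<dots> \<le> e"
      using dist C1 by (simp add: field_simps)
    finally have "cmod (\<phi> i (l - \<sigma> m)) \<le> e" .
    moreover have "cmod (\<phi> i l) \<le> cmod (\<phi> i (\<sigma> m)) + cmod (\<phi> i (l - \<sigma> m))"
      using add[OF i m(1) lm] by (simp add: norm_triangle_ineq)
    moreover have "cmod (\<phi> i (\<sigma> m)) \<le> B * w i" using \<sigma> i by blast
    ultimately show "cmod (\<phi> i l) \<le> B * w i + e" by linarith
  qed
  then show "l \<in> {k \<in> S. \<forall>i\<in>I. cmod (\<phi> i k) \<le> B * w i}" using l by blast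
qed

text \<open>A bound on a ball around \<open>k\<^sub>0\<close> transfers to all of \<open>S\<close> by translating and rescaling.\<close>
lemma uniform_bound_of_ball_bound:
  fixes \<phi> :: "'i \<Rightarrow> 'a \<Rightarrow> complex" and w :: "'i \<Rightarrow> real"
  assumes add: "\<And>i k l. i \<in> I \<Longrightarrow> k \<in> S \<Longrightarrow> l \<in> S \<Longrightarrow> \<phi> i (k + l) = \<phi> i k + \<phi> i l"
    and scale: "\<And>i c k. i \<in> I \<Longrightarrow> k \<in> S \<Longrightarrow> \<phi> i (sc c k) = c * \<phi> i k"
    and k0: "k0 \<in> S" and r: "r > 0"
    and ball: "\<And>i y. i \<in> I \<Longrightarrow> y \<in> S \<Longrightarrow> ip_norm ip (k0 - y) < r \<Longrightarrow> cmod (\<phi> i y) \<le> B * w i"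
    and i: "i \<in> I" and k: "k \<in> S"
  shows "cmod (\<phi> i k) \<le> 4 * B / r * w i * ip_norm ip k"
proof (cases "k = 0")
  case True
  then show ?thesis using scale[OF i mem_zero, of 0] by simp
next
  case False
  have nk: "ip_norm ip k > 0" using ip_norm_pos[OF k False] .
  define t where "t = r / (2 * ip_norm ip k)"
  have t: "t > 0" unfolding t_def using r nk by simp
  define k' where "k' = sc (complex_of_real t) k"
  have "ip_norm ip k' = t * ip_norm ip k" unfolding k'_def using ip_norm_scale[OF k] t by simp
  then have k': "k' \<in> S" "ip_norm ip k' = r / 2"
    using mem_scale[OF k] nk unfolding k'_def t_def by auto
  have "ip_norm ip (k0 - (k0 + k')) < r" using ip_norm_minus[OF k'(1)] k'(2) r by simp
  then have "cmod (\<phi> i (k0 + k')) \<le> B * w i" using ball[OF i mem_add[OF k0 k'(1)]] by simp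
  moreover have "cmod (\<phi> i k0) \<le> B * w i" using ball[OF i k0] r by simp
  moreover have "\<phi> i k' = \<phi> i (k0 + k') - \<phi> i k0" using add[OF i k0 k'(1)] by simp
  ultimately have "cmod (\<phi> i k') \<le> 2 * B * w i"
    using norm_triangle_ineq4[of "\<phi> i (k0 + k')" "\<phi> i k0"] by simp
  moreover have "cmod (\<phi> i k') = t * cmod (\<phi> i k)"
    unfolding k'_def using scale[OF i k] t by (simp add: norm_mult)
  ultimately have "cmod (\<phi> i k) \<le> 2 * B * w i / t" using t by (simp add: field_simps)
  also have "\<dots> = 4 * B / r * w i * ip_norm ip k" unfolding t_def using r nk by (simp add: field_simps)
  finally show ?thesis .
qed

lemma uniform_boundedness:
  fixes \<phi> :: "'i \<Rightarrow> 'a \<Rightarrow> complex" and w :: "'i \<Rightarrow> real"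
  assumes add: "\<And>i k l. i \<in> I \<Longrightarrow> k \<in> S \<Longrightarrow> l \<in> S \<Longrightarrow> \<phi> i (k + l) = \<phi> i k + \<phi> i l"
    and scale: "\<And>i c k. i \<in> I \<Longrightarrow> k \<in> S \<Longrightarrow> \<phi> i (sc c k) = c * \<phi> i k"
    and bounded: "\<And>i. i \<in> I \<Longrightarrow> \<exists>C. \<forall>k\<in>S. cmod (\<phi> i k) \<le> C * ip_norm ip k"
    and pointwise: "\<And>k. k \<in> S \<Longrightarrow> \<exists>n::nat. \<forall>i\<in>I. cmod (\<phi> i k) \<le> real n * w i"
  shows "\<exists>M\<ge>0. \<forall>i\<in>I. \<forall>k\<in>S. cmod (\<phi> i k) \<le> M * w i * ip_norm ip k"
proof -
  define E where "E n = {k \<in> S. \<forall>i\<in>I. cmod (\<phi> i k) \<le> real n * w i}" for n :: nat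
  have "\<exists>n. carrier.mtopology interior_of E n \<noteq> {}"
  proof (rule ccontr)
    assume "\<nexists>n. carrier.mtopology interior_of E n \<noteq> {}"
    then have "carrier.mtopology interior_of \<Union> (range E) = {}"
      using closedin_uniformly_bounded[OF add bounded] mcomplete_carrier_dist
      by (intro carrier.metric_Baire_category_alt) (auto simp: E_def)
    moreover have "\<Union> (range E) = S" using pointwise unfolding E_def by blast
    ultimately have "S = {}" by (metis carrier.topspace_mtopology interior_of_topspace)
    then show False using mem_zero by blast
  qed
  then obtain n k0 where "k0 \<in> carrier.mtopology interior_of E n" by blast
  then obtain T where T: "openin carrier.mtopology T" "k0 \<in> T" "T \<subseteq> E n"
    unfolding interior_of_def by blast
  then obtain r where r: "r > 0" and ball: "carrier.mball k0 r \<subseteq> E n"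
    unfolding carrier.openin_mtopology by blast
  have k0: "k0 \<in> S" using T unfolding E_def by blast
  have ball_bound: "cmod (\<phi> i y) \<le> real n * w i" if "i \<in> I" "y \<in> S" "ip_norm ip (k0 - y) < r" for i y
  proof -
    have "y \<in> carrier.mball k0 r" using that k0 by (simp add: carrier_dist_def)
    then show ?thesis using ball that(1) unfolding E_def by blast
  qed
  then show ?thesis
    using uniform_bound_of_ball_bound[of I \<phi>, OF add scale k0 r ball_bound] r
    by (intro exI[of _ "4 * real n / r"]) auto
qed

end

section \<open>Dual norms and linear homeomorphisms\<close>

text \<open>The dual-norm identity of a mixed-order duality, known on the dense part \<open>H \<inter> Ha\<close>,
 extends to all of \<open>Ha\<close> by approximation.\<close>
lemma dual_norm_le:
  assumes Ha: "hilbert_carrier sc Ha ipa" and Hb: "hilbert_carrier sc Hb ipb"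
    and dense: "dense_in Ha ipa (H \<inter> Ha)"
    and dual: "dual_norm_cond ipH (H \<inter> Hb) ipb (H \<inter> Ha) ipa"
    and q_diff: "\<And>x z y. x \<in> Ha \<Longrightarrow> z \<in> Ha \<Longrightarrow> y \<in> Hb \<Longrightarrow> q (x - z) y = q x y - q z y"
    and C: "C \<ge> 0" and q_bounded: "\<And>x y. x \<in> Ha \<Longrightarrow> y \<in> Hb \<Longrightarrow> cmod (q x y) \<le> C * ip_norm ipa x * ip_norm ipb y"
    and q_ext: "\<And>g h. g \<in> H \<inter> Hb \<Longrightarrow> h \<in> H \<inter> Ha \<Longrightarrow> cmod (ipH g h) = cmod (q h g)"
    and x: "x \<in> Ha" and K: "K \<ge> 0" and x_bounded: "\<And>k. k \<in> Hb \<Longrightarrow> cmod (q x k) \<le> K * ip_norm ipb k"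
  shows "ip_norm ipa x \<le> K"
proof -
  interpret a: hilbert_carrier sc Ha ipa by (rule Ha)
  interpret b: hilbert_carrier sc Hb ipb by (rule Hb)
  have main: "ip_norm ipa x \<le> K + (1 + C) * e" if e: "e > 0" for e
  proof -
    obtain d where d: "d \<in> H \<inter> Ha" and xd: "ip_norm ipa (x - d) < e"
      using dense x e unfolding dense_in_def by blast
    have xd': "x - d \<in> Ha" using a.mem_diff x d by blast
    have "cmod (ipH g d) / ip_norm ipb g \<le> K + C * e" if g: "g \<in> H \<inter> Hb" "g \<noteq> 0" for g
    proof -
      have gb: "g \<in> Hb" using g by blast
      have "cmod (q d g) \<le> cmod (q x g) + cmod (q (x - d) g)"
        using q_diff[OF x _ gb, of d] d norm_triangle_ineq4[of "q x g" "q (x - d) g"] by simp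
      also have "cmod (q (x - d) g) \<le> C * ip_norm ipa (x - d) * ip_norm ipb g"
        using q_bounded[OF xd' gb] .
      also have "\<dots> \<le> C * e * ip_norm ipb g"
        using xd C b.ip_norm_nonneg[OF gb] by (intro mult_right_mono mult_left_mono) auto
      finally have "cmod (q d g) \<le> (K + C * e) * ip_norm ipb g"
        using x_bounded[OF gb] by (simp add: algebra_simps)
      then show ?thesis using q_ext[OF g(1) d] b.ip_norm_pos[OF gb g(2)] by (simp add: pos_divide_le_eq)
    qed
    moreover have "K + C * e \<ge> 0" using K C e by simp
    ultimately have "ip_norm ipa d \<le> K + C * e"
      using conjunct2[OF bspec[OF dual[unfolded dual_norm_cond_def] d]] by blast
    moreover have "ip_norm ipa x \<le> ip_norm ipa (x - d) + ip_norm ipa d"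
      using a.ip_norm_triangle[OF xd', of d] d by simp
    ultimately show ?thesis using xd by (simp add: algebra_simps)
  qed
  show ?thesis
  proof (rule field_le_epsilon)
    fix e :: real assume "e > 0"
    then show "ip_norm ipa x \<le> K + e"
      using main[of "e / (1 + C)"] C by simp
  qed
qed

lemma continuous_betw_cong:
  "(\<And>x. x \<in> S \<Longrightarrow> F x = F' x) \<Longrightarrow> continuous_betw S ipS T ipT F \<longleftrightarrow> continuous_betw S ipS T ipT F'"
  unfolding continuous_betw_def by simp

lemma continuous_betw_uminus:
  assumes "hilbert_carrier sc T ipT" "F ` S \<subseteq> T" "continuous_betw S ipS T ipT F"
  shows "continuous_betw S ipS T ipT (\<lambda>x. - F x)"
proof -
  interpret T: hilbert_carrier sc T ipT by fact
  have "ip_norm ipT (- F y - - F x) = ip_norm ipT (F y - F x)" if "x \<in> S" "y \<in> S" for x y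
    using T.ip_norm_minus_commute[of "F x" "F y"] assms(2) that by auto
  then show ?thesis using assms(3) unfolding continuous_betw_def by simp
qed

lemma continuous_betw_compose_uminus:
  assumes "hilbert_carrier sc S ipS" "continuous_betw S ipS T ipT F"
  shows "continuous_betw S ipS T ipT (\<lambda>y. F (- y))"
  unfolding continuous_betw_def
proof (intro ballI allI impI)
  interpret S: hilbert_carrier sc S ipS by fact
  fix x and e :: real assume x: "x \<in> S" and e: "e > 0"
  obtain d where "d > 0" and d: "\<forall>y\<in>S. ip_norm ipS (y - - x) < d \<longrightarrow> ip_norm ipT (F y - F (- x)) < e"
    using assms(2) S.mem_uminus[OF x] e unfolding continuous_betw_def by blast
  have "ip_norm ipS (- y - - x) = ip_norm ipS (y - x)" if "y \<in> S" for y
    using S.ip_norm_minus_commute[OF x that] by (simp add: add.commute)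
  then show "\<exists>d>0. \<forall>y\<in>S. ip_norm ipS (y - x) < d \<longrightarrow> ip_norm ipT (F (- y) - F (- x)) < e"
    using \<open>d > 0\<close> d S.mem_uminus by (intro exI[of _ d]) auto
qed

lemma lin_homeo_inv_into:
  assumes S: "hilbert_carrier sc S ipS" and T: "hilbert_carrier sc T ipT"
    and W: "lin_homeo sc S ipS T ipT W"
  shows "lin_homeo sc T ipT S ipS (inv_into S W)"
proof -
  interpret S: hilbert_carrier sc S ipS by (rule S)
  interpret T: hilbert_carrier sc T ipT by (rule T)
  have bij: "bij_betw W S T" and lin: "lin_on sc sc S W"
    using W unfolding lin_homeo_def by auto
  have inv_S: "inv_into S W k \<in> S" and W_inv: "W (inv_into S W k) = k" if "k \<in> T" for k
    using bij_betw_inv_into_right[OF bij that] bij_betwE[OF bij_betw_inv_into[OF bij]] that by auto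
  have inv_W: "inv_into S W (W a) = a" if "a \<in> S" for a
    using bij_betw_inv_into_left[OF bij that] .
  have "lin_on sc sc T (inv_into S W)"
    unfolding lin_on_def
  proof (intro conjI ballI allI)
    show "module.subspace sc T" by (rule T.subspace_carrier)
    show "inv_into S W (k + l) = inv_into S W k + inv_into S W l" if "k \<in> T" "l \<in> T" for k l
    proof -
      have "W (inv_into S W k + inv_into S W l) = k + l"
        using lin inv_S W_inv that unfolding lin_on_def by simp
      then show ?thesis using inv_W[OF S.mem_add[OF inv_S[OF that(1)] inv_S[OF that(2)]]] by simp
    qed
    show "inv_into S W (sc c k) = sc c (inv_into S W k)" if "k \<in> T" for k c
    proof -
      have "W (sc c (inv_into S W k)) = sc c k"
        using lin inv_S W_inv that unfolding lin_on_def by simp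
      then show ?thesis using inv_W[OF S.mem_scale[OF inv_S[OF that], of c]] by simp
    qed
  qed
  moreover have "continuous_betw S ipS T ipT (inv_into T (inv_into S W))"
    using W continuous_betw_cong[of S "inv_into T (inv_into S W)" W] inv_into_inv_into_eq[OF bij]
    unfolding lin_homeo_def by blast
  ultimately show ?thesis
    using W bij_betw_inv_into[OF bij] unfolding lin_homeo_def by blast
qed

lemma lin_homeo_uminus:
  assumes S: "hilbert_carrier sc S ipS" and T: "hilbert_carrier sc T ipT"
    and W: "lin_homeo sc S ipS T ipT W"
  shows "lin_homeo sc S ipS T ipT (\<lambda>x. - W x)"
proof -
  interpret S: hilbert_carrier sc S ipS by (rule S)
  interpret T: hilbert_carrier sc T ipT by (rule T)
  have bij: "bij_betw W S T" and lin: "lin_on sc sc S W"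
    using W unfolding lin_homeo_def by auto
  have lin': "lin_on sc sc S (\<lambda>x. - W x)"
    using lin unfolding lin_on_def by (simp add: S.scale_minus_right)
  have "bij_betw uminus T T"
    using T.mem_uminus by (intro bij_betwI[where g = uminus]) auto
  then have bij': "bij_betw (\<lambda>x. - W x) S T"
    using bij_betw_trans[OF bij] by (simp add: o_def)
  moreover have "continuous_betw S ipS T ipT (\<lambda>x. - W x)"
    using continuous_betw_uminus[OF T] W bij_betw_imp_surj_on[OF bij] unfolding lin_homeo_def by blast
  moreover have "inv_into S (\<lambda>x. - W x) y = inv_into S W (- y)" if "y \<in> T" for y
  proof (rule inv_into_f_eq)
    show "inj_on (\<lambda>x. - W x) S" using bij' by (rule bij_betw_imp_inj_on)
    show "inv_into S W (- y) \<in> S" "- W (inv_into S W (- y)) = y"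
      using bij_betw_inv_into_right[OF bij] bij_betwE[OF bij_betw_inv_into[OF bij]] T.mem_uminus[OF that]
      by auto
  qed
  then have "continuous_betw T ipT S ipS (inv_into S (\<lambda>x. - W x))"
    using continuous_betw_compose_uminus[OF T, of S ipS "inv_into S W"] W
      continuous_betw_cong[of T "inv_into S (\<lambda>x. - W x)" "\<lambda>y. inv_into S W (- y)"]
    unfolding lin_homeo_def by blast
  ultimately show ?thesis using lin' unfolding lin_homeo_def by blast
qed

section \<open>Closed symmetric operators and their adjoints\<close>

lemma gr_norm_tendsto_0_iff:
  "(\<lambda>n. gr_norm ip (u n) (v n)) \<longlonglongrightarrow> 0 \<longleftrightarrow>
    (\<lambda>n. ip_norm ip (u n)) \<longlonglongrightarrow> 0 \<and> (\<lambda>n. ip_norm ip (v n)) \<longlonglongrightarrow> 0"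
proof
  assume gr: "(\<lambda>n. gr_norm ip (u n) (v n)) \<longlonglongrightarrow> 0"
  have u: "\<forall>n. norm (ip_norm ip (u n)) \<le> gr_norm ip (u n) (v n)"
    and v: "\<forall>n. norm (ip_norm ip (v n)) \<le> gr_norm ip (u n) (v n)"
    unfolding gr_norm_def by (simp_all add: real_sqrt_sum_squares_ge1 real_sqrt_sum_squares_ge2)
  show "(\<lambda>n. ip_norm ip (u n)) \<longlonglongrightarrow> 0 \<and> (\<lambda>n. ip_norm ip (v n)) \<longlonglongrightarrow> 0"
    using Lim_null_comparison[OF always_eventually[OF u] gr]
      Lim_null_comparison[OF always_eventually[OF v] gr] by blast
next
  assume "(\<lambda>n. ip_norm ip (u n)) \<longlonglongrightarrow> 0 \<and> (\<lambda>n. ip_norm ip (v n)) \<longlonglongrightarrow> 0"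
  then have lim: "(\<lambda>n. norm (ip_norm ip (u n)) + norm (ip_norm ip (v n))) \<longlonglongrightarrow> 0"
    using tendsto_add_zero tendsto_norm_zero by blast
  have "\<forall>n. norm (gr_norm ip (u n) (v n)) \<le> norm (ip_norm ip (u n)) + norm (ip_norm ip (v n))"
    unfolding gr_norm_def using sqrt_sum_squares_le_sum_abs by simp
  from Lim_null_comparison[OF always_eventually[OF this] lim]
  show "(\<lambda>n. gr_norm ip (u n) (v n)) \<longlonglongrightarrow> 0" .
qed

locale closed_symmetric_operator = X: hilbert_carrier scX X ipX
  for scX :: "complex \<Rightarrow> 'x::ab_group_add \<Rightarrow> 'x" and X ipX +
  fixes domA :: "'x set" and A :: "'x \<Rightarrow> 'x"
  assumes cdd_symmetric: "cdd_symmetric scX X ipX domA A"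
begin

abbreviation "Dstar \<equiv> adj_dom X ipX domA A"
abbreviation "Astar \<equiv> adj X ipX domA A"

lemma dom_subspace: "X.subspace domA"
  using cdd_symmetric unfolding cdd_symmetric_def lin_on_def by blast

lemma A_add: "x \<in> domA \<Longrightarrow> y \<in> domA \<Longrightarrow> A (x + y) = A x + A y"
  using cdd_symmetric unfolding cdd_symmetric_def lin_on_def by blast

lemma A_scale: "x \<in> domA \<Longrightarrow> A (scX c x) = scX c (A x)"
  using cdd_symmetric unfolding cdd_symmetric_def lin_on_def by blast

lemma A_mem: "x \<in> domA \<Longrightarrow> A x \<in> X"
  using cdd_symmetric unfolding cdd_symmetric_def by blast

lemma dense_dom: "dense_in X ipX domA"
  using cdd_symmetric unfolding cdd_symmetric_def by blast

lemma dom_mem: "x \<in> domA \<Longrightarrow> x \<in> X"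
  using dense_dom unfolding dense_in_def by blast

lemma A_closed:
  "(\<And>n. s n \<in> domA) \<Longrightarrow> f \<in> X \<Longrightarrow> h \<in> X \<Longrightarrow> (\<lambda>n. gr_norm ipX (s n - f) (A (s n) - h)) \<longlonglongrightarrow> 0
    \<Longrightarrow> f \<in> domA \<and> A f = h"
  using cdd_symmetric unfolding cdd_symmetric_def by blast

lemma A_symmetric: "f \<in> domA \<Longrightarrow> g \<in> domA \<Longrightarrow> ipX (A f) g = ipX f (A g)"
  using cdd_symmetric unfolding cdd_symmetric_def by blast

lemma dom_zero: "0 \<in> domA"
  using dom_subspace X.subspace_0 by blast

lemma dom_add: "x \<in> domA \<Longrightarrow> y \<in> domA \<Longrightarrow> x + y \<in> domA"
  using dom_subspace X.subspace_add by blast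

lemma dom_scale: "x \<in> domA \<Longrightarrow> scX c x \<in> domA"
  using dom_subspace X.subspace_scale by blast

lemma eq_if_ip_dom_eq:
  assumes h1: "h1 \<in> X" and h2: "h2 \<in> X" and eq: "\<And>f. f \<in> domA \<Longrightarrow> ipX f h1 = ipX f h2"
  shows "h1 = h2"
proof (rule ccontr)
  define v where "v = h1 - h2"
  assume "h1 \<noteq> h2"
  then have v: "v \<in> X" and pos: "ip_norm ipX v > 0"
    using X.mem_diff[OF h1 h2] X.ip_norm_pos[of v] unfolding v_def by auto
  obtain f where f: "f \<in> domA" and fv: "ip_norm ipX (v - f) < ip_norm ipX v"
    using dense_dom v pos unfolding dense_in_def by blast
  have "ipX f v = 0" using eq[OF f] X.ip.diff_right[OF dom_mem[OF f] h1 h2] v_def by simp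
  then have "ipX v v = ipX (v - f) v" using X.ip.diff_left[OF v dom_mem[OF f] v] by simp
  moreover have "cmod (ipX v v) = (ip_norm ipX v)\<^sup>2" using X.ip_self[OF v] by (simp add: norm_power)
  ultimately have "(ip_norm ipX v)\<^sup>2 \<le> ip_norm ipX (v - f) * ip_norm ipX v"
    using X.cauchy_schwarz[OF X.mem_diff[OF v dom_mem[OF f]] v] by simp
  also have "\<dots> < ip_norm ipX v * ip_norm ipX v" using fv pos by (rule mult_strict_right_mono)
  finally show False by (simp add: power2_eq_square)
qed

lemma Dstar_mem: "g \<in> Dstar \<Longrightarrow> g \<in> X"
  unfolding adj_dom_def by blast

lemma Astar_mem_ip:
  assumes g: "g \<in> Dstar"
  shows "Astar g \<in> X \<and> (\<forall>f\<in>domA. ipX (A f) g = ipX f (Astar g))"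
proof -
  obtain h where h: "h \<in> X" "\<forall>f\<in>domA. ipX (A f) g = ipX f h" using g unfolding adj_dom_def by blast
  have "\<exists>!h. h \<in> X \<and> (\<forall>f\<in>domA. ipX (A f) g = ipX f h)"
    using h eq_if_ip_dom_eq by (intro ex1I[of _ h]) auto
  then show ?thesis unfolding adj_def by (rule theI')
qed

lemma Astar_mem: "g \<in> Dstar \<Longrightarrow> Astar g \<in> X"
  using Astar_mem_ip by blast

lemma Astar_ip: "g \<in> Dstar \<Longrightarrow> f \<in> domA \<Longrightarrow> ipX (A f) g = ipX f (Astar g)"
  using Astar_mem_ip by blast

lemma AstarI:
  assumes "g \<in> X" "h \<in> X" "\<And>f. f \<in> domA \<Longrightarrow> ipX (A f) g = ipX f h"
  shows "g \<in> Dstar" "Astar g = h"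
proof -
  show g: "g \<in> Dstar" unfolding adj_dom_def using assms by blast
  show "Astar g = h" using eq_if_ip_dom_eq[OF Astar_mem[OF g] assms(2)] Astar_ip[OF g] assms(3) by simp
qed

lemma Astar_extends_A: assumes "f \<in> domA" shows "f \<in> Dstar" "Astar f = A f"
  using AstarI[OF dom_mem A_mem A_symmetric[OF _ assms]] assms by blast+

lemma Astar_closed:
  assumes f: "\<And>n. f n \<in> Dstar" and u: "u \<in> X" "v \<in> X"
    and lim: "(\<lambda>n. ip_norm ipX (f n - u)) \<longlonglongrightarrow> 0" "(\<lambda>n. ip_norm ipX (Astar (f n) - v)) \<longlonglongrightarrow> 0"
  shows "u \<in> Dstar \<and> Astar u = v"
proof -
  have "ipX (A b) u = ipX b v" if b: "b \<in> domA" for b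
  proof -
    have "(\<lambda>n. ipX (A b) (f n)) \<longlonglongrightarrow> ipX (A b) u"
      by (rule X.ip_tendsto_right[OF A_mem[OF b] u(1) Dstar_mem[OF f] lim(1)])
    moreover have "(\<lambda>n. ipX b (Astar (f n))) \<longlonglongrightarrow> ipX b v"
      by (rule X.ip_tendsto_right[OF dom_mem[OF b] u(2) Astar_mem[OF f] lim(2)])
    ultimately show ?thesis using Astar_ip[OF f b] LIMSEQ_unique by simp
  qed
  then show ?thesis using AstarI[OF u] by blast
qed

definition graph_dist_sq :: "'x \<Rightarrow> 'x \<Rightarrow> 'x \<Rightarrow> real" where
  "graph_dist_sq f h a = (ip_norm ipX (f - a))\<^sup>2 + (ip_norm ipX (h - A a))\<^sup>2"

text \<open>The parallelogram law at the midpoint of \<open>x\<close> and \<open>y\<close>, which again lies in \<open>domA\<close>.\<close>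
lemma graph_dist_sq_parallelogram:
  assumes f: "f \<in> X" and h: "h \<in> X" and x: "x \<in> domA" and y: "y \<in> domA"
    and d: "\<And>m. m \<in> domA \<Longrightarrow> d \<le> graph_dist_sq f h m"
  shows "(ip_norm ipX (x - y))\<^sup>2 + (ip_norm ipX (A x - A y))\<^sup>2
    \<le> 2 * graph_dist_sq f h x + 2 * graph_dist_sq f h y - 4 * d"
proof -
  have X_mems: "f - x \<in> X" "f - y \<in> X" "h - A x \<in> X" "h - A y \<in> X"
    using X.mem_diff f h dom_mem A_mem x y by auto
  define m where "m = scX (1/2) (x + y)"
  have m: "m \<in> domA" unfolding m_def using dom_scale dom_add x y by blast
  have two: "scX 2 z = z + z" for z using X.scale_left_distrib[of 1 1 z] by simp
  have "(f - x) + (f - y) = scX 2 (f - m)"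
    unfolding m_def by (simp add: X.scale_right_diff_distrib two algebra_simps)
  then have n1: "ip_norm ipX ((f - x) + (f - y)) = 2 * ip_norm ipX (f - m)"
    using X.ip_norm_scale[OF X.mem_diff[OF f dom_mem[OF m]], of 2] by simp
  have "A m = scX (1/2) (A x + A y)" unfolding m_def using A_scale A_add x y dom_add by simp
  then have "(h - A x) + (h - A y) = scX 2 (h - A m)"
    by (simp add: X.scale_right_diff_distrib two algebra_simps)
  then have n2: "ip_norm ipX ((h - A x) + (h - A y)) = 2 * ip_norm ipX (h - A m)"
    using X.ip_norm_scale[OF X.mem_diff[OF h A_mem[OF m]], of 2] by simp
  have n3: "ip_norm ipX ((f - x) - (f - y)) = ip_norm ipX (x - y)"
    using X.ip_norm_minus_commute[OF dom_mem[OF y] dom_mem[OF x]] by simp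
  have n4: "ip_norm ipX ((h - A x) - (h - A y)) = ip_norm ipX (A x - A y)"
    using X.ip_norm_minus_commute[OF A_mem[OF y] A_mem[OF x]] by simp
  show ?thesis
    using X.parallelogram[OF X_mems(1,2)] X.parallelogram[OF X_mems(3,4)] d[OF m]
    unfolding n1 n2 n3 n4 graph_dist_sq_def by (simp add: power_mult_distrib)
qed

lemma graph_minimizing_Cauchy:
  assumes f: "f \<in> X" and h: "h \<in> X" and a: "\<And>n. a n \<in> domA"
    and d: "\<And>m. m \<in> domA \<Longrightarrow> d \<le> graph_dist_sq f h m"
    and a_min: "\<And>n. graph_dist_sq f h (a n) < d + inverse (real (Suc n))"
    and e: "e > 0"
  shows "\<exists>N. \<forall>m\<ge>N. \<forall>n\<ge>N. ip_norm ipX (a m - a n) < e \<and> ip_norm ipX (A (a m) - A (a n)) < e"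
proof -
  obtain N :: nat where "4 / e\<^sup>2 < real N" using reals_Archimedean2 by blast
  then have N': "inverse (real (Suc N)) < e\<^sup>2 / 4"
    using e by (simp add: field_simps add_pos_pos add_strict_increasing2)
  have "ip_norm ipX (a m - a n) < e \<and> ip_norm ipX (A (a m) - A (a n)) < e" if "m \<ge> N" "n \<ge> N" for m n
  proof -
    have "inverse (real (Suc m)) \<le> inverse (real (Suc N))" "inverse (real (Suc n)) \<le> inverse (real (Suc N))"
      using that by (auto simp: field_simps)
    then have "(ip_norm ipX (a m - a n))\<^sup>2 + (ip_norm ipX (A (a m) - A (a n)))\<^sup>2 < e\<^sup>2"
      using graph_dist_sq_parallelogram[OF f h a a d, of m n] a_min[of m] a_min[of n] N' by linarith
    then have "(ip_norm ipX (a m - a n))\<^sup>2 < e\<^sup>2" "(ip_norm ipX (A (a m) - A (a n)))\<^sup>2 < e\<^sup>2"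
      using zero_le_power2[of "ip_norm ipX (a m - a n)"] zero_le_power2[of "ip_norm ipX (A (a m) - A (a n))"]
      by linarith+
    then show ?thesis using e by (auto intro: power_less_imp_less_base)
  qed
  then show ?thesis by blast
qed

lemma graph_complete:
  assumes a: "\<And>n. a n \<in> domA"
    and Cauchy: "\<And>e. e > 0 \<Longrightarrow>
      \<exists>N. \<forall>m\<ge>N. \<forall>n\<ge>N. ip_norm ipX (a m - a n) < e \<and> ip_norm ipX (A (a m) - A (a n)) < e"
  shows "\<exists>b\<in>domA. (\<lambda>n. ip_norm ipX (a n - b)) \<longlonglongrightarrow> 0 \<and> (\<lambda>n. ip_norm ipX (A (a n) - A b)) \<longlonglongrightarrow> 0"
proof -
  obtain b where b: "b \<in> X" "(\<lambda>n. ip_norm ipX (a n - b)) \<longlonglongrightarrow> 0"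
    using X.complete[of a] dom_mem[OF a] Cauchy by (metis (no_types, lifting))
  obtain c where c: "c \<in> X" "(\<lambda>n. ip_norm ipX (A (a n) - c)) \<longlonglongrightarrow> 0"
    using X.complete[of "\<lambda>n. A (a n)"] A_mem[OF a] Cauchy by (metis (no_types, lifting))
  have "(\<lambda>n. gr_norm ipX (a n - b) (A (a n) - c)) \<longlonglongrightarrow> 0"
    using b(2) c(2) by (simp add: gr_norm_tendsto_0_iff)
  then have "b \<in> domA \<and> A b = c"
    using A_closed[of a, OF a b(1) c(1)] by blast
  then show ?thesis using b c by blast
qed

lemma graph_best_approximation:
  assumes f: "f \<in> X" and h: "h \<in> X"
  shows "\<exists>b\<in>domA. \<forall>c\<in>domA. graph_dist_sq f h b \<le> graph_dist_sq f h c"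
proof -
  let ?Q = "graph_dist_sq f h"
  define d where "d = Inf (?Q ` domA)"
  have bdd: "bdd_below (?Q ` domA)" by (rule bdd_belowI[of _ 0]) (auto simp: graph_dist_sq_def)
  have d: "d \<le> ?Q m" if "m \<in> domA" for m unfolding d_def using cInf_lower[OF imageI[OF that] bdd] .
  have "\<exists>x\<in>domA. ?Q x < d + inverse (real (Suc n))" for n
    using cInf_lessD[of "?Q ` domA" "d + inverse (real (Suc n))"] dom_zero unfolding d_def by auto
  then obtain a where a: "\<And>n. a n \<in> domA" "\<And>n. ?Q (a n) < d + inverse (real (Suc n))"
    by metis
  obtain b where b: "b \<in> domA" "(\<lambda>n. ip_norm ipX (a n - b)) \<longlonglongrightarrow> 0"
    "(\<lambda>n. ip_norm ipX (A (a n) - A b)) \<longlonglongrightarrow> 0"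
    using graph_complete[OF a(1) graph_minimizing_Cauchy[OF f h a(1) d a(2)]] by blast
  have "(\<lambda>n. ip_norm ipX (f - a n)) \<longlonglongrightarrow> ip_norm ipX (f - b)"
    using X.ip_norm_tendsto[of "f - b" "\<lambda>n. f - a n"] X.mem_diff f dom_mem a(1) b
      X.ip_norm_minus_commute[OF dom_mem[OF b(1)] dom_mem[OF a(1)]] by simp
  moreover have "(\<lambda>n. ip_norm ipX (h - A (a n))) \<longlonglongrightarrow> ip_norm ipX (h - A b)"
    using X.ip_norm_tendsto[of "h - A b" "\<lambda>n. h - A (a n)"] X.mem_diff h A_mem a(1) b
      X.ip_norm_minus_commute[OF A_mem[OF b(1)] A_mem[OF a(1)]] by simp
  ultimately have "(\<lambda>n. ?Q (a n)) \<longlonglongrightarrow> ?Q b"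
    unfolding graph_dist_sq_def by (intro tendsto_intros)
  moreover have "(\<lambda>n. ?Q (a n)) \<longlonglongrightarrow> d"
  proof (rule tendsto_sandwich[of "\<lambda>n. d" _ _ "\<lambda>n. d + inverse (real (Suc n))"])
    show "(\<lambda>n. d + inverse (real (Suc n))) \<longlonglongrightarrow> d"
      using tendsto_add[OF tendsto_const[of d] LIMSEQ_inverse_real_of_nat] by simp
    show "\<forall>\<^sub>F n in sequentially. d \<le> ?Q (a n)"
      by (intro always_eventually allI d a(1))
    show "\<forall>\<^sub>F n in sequentially. ?Q (a n) \<le> d + inverse (real (Suc n))"
      by (intro always_eventually allI less_imp_le a(2))
  qed simp
  ultimately have "?Q b = d" by (rule LIMSEQ_unique)
  then show ?thesis using b(1) d by metis
qed

lemma graph_best_approximation_orthogonal: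
  assumes f: "f \<in> X" and h: "h \<in> X" and a: "a \<in> domA"
    and min: "\<And>c. c \<in> domA \<Longrightarrow> graph_dist_sq f h a \<le> graph_dist_sq f h c"
    and b: "b \<in> domA"
  shows "ipX b (f - a) + ipX (A b) (h - A a) = 0"
proof -
  define v where "v = f - a"
  define w where "w = h - A a"
  have v: "v \<in> X" and w: "w \<in> X" and bX: "b \<in> X" and Ab: "A b \<in> X"
    using X.mem_diff f h dom_mem A_mem a b unfolding v_def w_def by auto
  define z where "z = ipX b v + ipX (A b) w"
  define K where "K = (ip_norm ipX b)\<^sup>2 + (ip_norm ipX (A b))\<^sup>2"
  define s where "s = 1 / (K + 1)"
  have K: "K \<ge> 0" unfolding K_def by simp
  then have s: "s > 0" "s * K < 1" unfolding s_def by (simp_all add: field_simps)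
  \<comment> \<open>perturb the minimiser in the direction \<open>b\<close> by a small multiple of \<open>z\<close>\<close>
  define t where "t = complex_of_real s * z"
  have shift_f: "f - (a + scX t b) = v - scX t b" unfolding v_def by (simp add: algebra_simps)
  have shift_h: "h - A (a + scX t b) = w - scX t (A b)"
    unfolding w_def using A_add[OF a dom_scale[OF b]] A_scale[OF b] by (simp add: algebra_simps)
  have "graph_dist_sq f h (a + scX t b) = graph_dist_sq f h a - 2 * Re (cnj t * z) + (cmod t)\<^sup>2 * K"
    unfolding graph_dist_sq_def shift_f shift_h v_def[symmetric] w_def[symmetric] z_def K_def
      X.ip_norm_diff_scale_squared[OF v bX] X.ip_norm_diff_scale_squared[OF w Ab]
    by (simp add: algebra_simps)
  then have "2 * Re (cnj t * z) \<le> (cmod t)\<^sup>2 * K"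
    using min[OF dom_add[OF a dom_scale[OF b, of t]]] by simp
  moreover have "Re (cnj t * z) = s * (cmod z)\<^sup>2"
    unfolding t_def cmod_power2 by (simp add: power2_eq_square algebra_simps)
  moreover have "(cmod t)\<^sup>2 = s\<^sup>2 * (cmod z)\<^sup>2"
    unfolding t_def using s by (simp add: norm_mult power_mult_distrib)
  ultimately have "s * (2 * (cmod z)\<^sup>2) \<le> s * ((s * K) * (cmod z)\<^sup>2)"
    by (simp add: power2_eq_square algebra_simps)
  then have "2 * (cmod z)\<^sup>2 \<le> (s * K) * (cmod z)\<^sup>2" using s(1) by simp
  also have "\<dots> \<le> (cmod z)\<^sup>2" using s K by (intro mult_left_le_one_le) auto
  finally show ?thesis unfolding z_def v_def w_def by simp
qed

text \<open>Project \<open>(f, Astar f)\<close> onto the closed graph of \<open>A\<close>. The residual \<open>(v, w)\<close> is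
 orthogonal to that graph, i.e. \<open>w \<in> Dstar\<close> with \<open>Astar w = - v\<close>, and the symmetry of \<open>f\<close>
 against \<open>w\<close> gives \<open>\<parallel>v\<parallel>\<^sup>2 + \<parallel>w\<parallel>\<^sup>2 = 0\<close>.\<close>
lemma mem_dom_if_Astar_symmetric:
  assumes f: "f \<in> Dstar" and sym: "\<And>g. g \<in> Dstar \<Longrightarrow> ipX (Astar f) g = ipX f (Astar g)"
  shows "f \<in> domA"
proof -
  have fX: "f \<in> X" and hX: "Astar f \<in> X" using Dstar_mem Astar_mem f by auto
  obtain a where a: "a \<in> domA" and min: "\<And>c. c \<in> domA \<Longrightarrow>
      graph_dist_sq f (Astar f) a \<le> graph_dist_sq f (Astar f) c"
    using graph_best_approximation[OF fX hX] by blast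
  define v where "v = f - a"
  define w where "w = Astar f - A a"
  have v: "v \<in> X" and w: "w \<in> X"
    using X.mem_diff fX hX dom_mem A_mem a unfolding v_def w_def by auto
  have "ipX (A b) w = ipX b (- v)" if b: "b \<in> domA" for b
    using graph_best_approximation_orthogonal[OF fX hX a min b] X.ip.minus_right[OF dom_mem[OF b] v]
    unfolding v_def w_def by (simp add: add_eq_0_iff)
  then have w_Dstar: "w \<in> Dstar" and Astar_w: "Astar w = - v"
    using AstarI[OF w X.mem_uminus[OF v]] by auto
  have "ipX w w = ipX (Astar f) w - ipX (A a) w"
    using X.ip.diff_left[OF hX A_mem[OF a] w] unfolding w_def by simp
  also have "\<dots> = ipX f (- v) - ipX a (- v)"
    using sym[OF w_Dstar] Astar_ip[OF w_Dstar a] Astar_w by simp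
  also have "\<dots> = - ipX v v"
    using X.ip.diff_left[OF fX dom_mem[OF a] X.mem_uminus[OF v]] X.ip.minus_right[OF v v]
    unfolding v_def by simp
  finally have "complex_of_real ((ip_norm ipX w)\<^sup>2) = complex_of_real (- (ip_norm ipX v)\<^sup>2)"
    using X.ip_self[OF v] X.ip_self[OF w] by simp
  then have "(ip_norm ipX w)\<^sup>2 + (ip_norm ipX v)\<^sup>2 = 0" by (simp only: of_real_eq_iff)
  then have "v = 0" using X.ip_norm_eq_0_iff[OF v] by (simp add: add_nonneg_eq_0_iff)
  then show ?thesis using a unfolding v_def by simp
qed

end

section \<open>Reduction tuples\<close>

locale reduction_setting = closed_symmetric_operator scX X ipX domA A
  for scX :: "complex \<Rightarrow> 'x::ab_group_add \<Rightarrow> 'x" and X ipX domA A +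
  fixes sc :: "complex \<Rightarrow> 'h::ab_group_add \<Rightarrow> 'h"
    and H Hmp Hpm :: "'h set" and ipH ipmp ippm p :: "'h \<Rightarrow> 'h \<Rightarrow> complex"
    and G :: "'x \<Rightarrow> 'h" and W :: "'h \<Rightarrow> 'h"
  assumes vector_space: "vector_space sc"
    and duality: "mixed_duality sc H ipH Hmp ipmp Hpm ippm"
    and pairing: "is_H_pairing sc H ipH Hmp ipmp Hpm ippm p"
    and reduction: "reduction_tuple scX X ipX domA A sc Hmp ipmp Hpm ippm p G W"
begin

sublocale vector_space sc by (rule vector_space)

sublocale H: hilbert_carrier sc H ipH
  using vector_space duality
  unfolding mixed_duality_def hilbert_carrier_def hilbert_carrier_axioms_def by blast

sublocale Hm: hilbert_carrier sc Hmp ipmp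
  using vector_space duality
  unfolding mixed_duality_def hilbert_carrier_def hilbert_carrier_axioms_def by blast

sublocale Hp: hilbert_carrier sc Hpm ippm
  using vector_space duality
  unfolding mixed_duality_def hilbert_carrier_def hilbert_carrier_axioms_def by blast

sublocale pair: sesquilinear sc Hmp Hpm p
  using pairing Hm.subspace_carrier Hp.subspace_carrier unfolding is_H_pairing_def
  by unfold_locales blast+

lemma Dstar_subspace: "X.subspace Dstar"
  using reduction unfolding reduction_tuple_def lin_on_def by blast

lemma G_add: "x \<in> Dstar \<Longrightarrow> y \<in> Dstar \<Longrightarrow> G (x + y) = G x + G y"
  using reduction unfolding reduction_tuple_def lin_on_def by blast

lemma G_scale: "x \<in> Dstar \<Longrightarrow> G (scX c x) = sc c (G x)"
  using reduction unfolding reduction_tuple_def lin_on_def by blast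

lemma G_image: "G ` Dstar = Hmp"
  using reduction unfolding reduction_tuple_def by blast

lemma G_mem: "x \<in> Dstar \<Longrightarrow> G x \<in> Hmp"
  using G_image by blast

lemma W_homeo: "lin_homeo sc Hmp ipmp Hpm ippm W"
  using reduction unfolding reduction_tuple_def by blast

lemma W_bij: "bij_betw W Hmp Hpm"
  using W_homeo unfolding lin_homeo_def by blast

lemma W_add: "x \<in> Hmp \<Longrightarrow> y \<in> Hmp \<Longrightarrow> W (x + y) = W x + W y"
  using W_homeo unfolding lin_homeo_def lin_on_def by blast

lemma W_scale: "x \<in> Hmp \<Longrightarrow> W (sc c x) = sc c (W x)"
  using W_homeo unfolding lin_homeo_def lin_on_def by blast

lemma W_mem: "x \<in> Hmp \<Longrightarrow> W x \<in> Hpm"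
  using W_bij bij_betwE by blast

lemma boundary_form:
  "f \<in> Dstar \<Longrightarrow> g \<in> Dstar \<Longrightarrow> ipX (Astar f) g - ipX f (Astar g) = p (G f) (W (G g))"
  using reduction unfolding reduction_tuple_def by blast

lemma W_G_onto_Hpm: "k \<in> Hpm \<Longrightarrow> \<exists>g\<in>Dstar. k = W (G g)"
  using W_bij G_image unfolding bij_betw_def by blast

lemma pairing_bounded: "\<exists>C\<ge>0. \<forall>x\<in>Hmp. \<forall>y\<in>Hpm. cmod (p x y) \<le> C * ip_norm ipmp x * ip_norm ippm y"
proof -
  obtain C where C: "\<forall>x\<in>Hmp. \<forall>y\<in>Hpm. cmod (p x y) \<le> C * ip_norm ipmp x * ip_norm ippm y"
    using pairing unfolding is_H_pairing_def by blast
  have "C * ip_norm ipmp x * ip_norm ippm y \<le> \<bar>C\<bar> * ip_norm ipmp x * ip_norm ippm y"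
    if "x \<in> Hmp" "y \<in> Hpm" for x y
    using Hm.ip_norm_nonneg[OF that(1)] Hp.ip_norm_nonneg[OF that(2)]
    by (intro mult_right_mono) auto
  then show ?thesis using C by (intro exI[of _ "\<bar>C\<bar>"]) force
qed

lemma pairing_eq_ip: "g \<in> H \<inter> Hmp \<Longrightarrow> h \<in> H \<inter> Hpm \<Longrightarrow> p g h = ipH g h"
  using pairing unfolding is_H_pairing_def by blast

lemma Hmp_norm_le_pairing_bound:
  assumes "x \<in> Hmp" "K \<ge> 0" "\<And>k. k \<in> Hpm \<Longrightarrow> cmod (p x k) \<le> K * ip_norm ippm k"
  shows "ip_norm ipmp x \<le> K"
proof -
  obtain C where "C \<ge> 0" "\<forall>x\<in>Hmp. \<forall>y\<in>Hpm. cmod (p x y) \<le> C * ip_norm ipmp x * ip_norm ippm y"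
    using pairing_bounded by blast
  moreover have "cmod (ipH g h) = cmod (p h g)" if "g \<in> H \<inter> Hpm" "h \<in> H \<inter> Hmp" for g h
    using pairing_eq_ip[OF that(2,1)] H.ip_commute[of h g] that by simp
  ultimately show ?thesis
    using dual_norm_le[OF Hm.hilbert_carrier_axioms Hp.hilbert_carrier_axioms, of H ipH, where q = p]
      duality pair.diff_left assms unfolding mixed_duality_def by blast
qed

lemma Hpm_norm_le_pairing_bound:
  assumes "k \<in> Hpm" "K \<ge> 0" "\<And>x. x \<in> Hmp \<Longrightarrow> cmod (p x k) \<le> K * ip_norm ipmp x"
  shows "ip_norm ippm k \<le> K"
proof -
  obtain C where "C \<ge> 0" "\<forall>x\<in>Hmp. \<forall>y\<in>Hpm. cmod (p x y) \<le> C * ip_norm ipmp x * ip_norm ippm y"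
    using pairing_bounded by blast
  then have "cmod (p y x) \<le> C * ip_norm ippm x * ip_norm ipmp y" if "x \<in> Hpm" "y \<in> Hmp" for x y
    using that by (simp add: mult.commute mult.left_commute)
  moreover have "cmod (ipH g h) = cmod (p g h)" if "g \<in> H \<inter> Hmp" "h \<in> H \<inter> Hpm" for g h
    using pairing_eq_ip[OF that] by simp
  ultimately show ?thesis
    using dual_norm_le[OF Hp.hilbert_carrier_axioms Hm.hilbert_carrier_axioms, of H ipH,
        where q = "\<lambda>a b. p b a"]
      duality pair.diff_right assms \<open>C \<ge> 0\<close> unfolding mixed_duality_def by blast
qed

lemma pairing_nondegenerate_left: "x \<in> Hmp \<Longrightarrow> (\<And>k. k \<in> Hpm \<Longrightarrow> p x k = 0) \<Longrightarrow> x = 0"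
  using Hmp_norm_le_pairing_bound[of x 0] Hm.ip_norm_eq_0_iff Hm.ip_norm_nonneg by force

lemma pairing_nondegenerate_right: "k \<in> Hpm \<Longrightarrow> (\<And>x. x \<in> Hmp \<Longrightarrow> p x k = 0) \<Longrightarrow> k = 0"
  using Hpm_norm_le_pairing_bound[of k 0] Hp.ip_norm_eq_0_iff Hp.ip_norm_nonneg by force

text \<open>The boundary form of \<open>Astar\<close> is skew-Hermitian.\<close>
lemma pairing_W_skew: "a \<in> Hmp \<Longrightarrow> b \<in> Hmp \<Longrightarrow> cnj (p a (W b)) = - p b (W a)"
proof -
  assume "a \<in> Hmp" "b \<in> Hmp"
  then obtain f g where f: "f \<in> Dstar" "a = G f" and g: "g \<in> Dstar" "b = G g"
    using G_image by blast
  have "cnj (ipX (Astar f) g - ipX f (Astar g)) = - (ipX (Astar g) f - ipX g (Astar f))"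
    using X.ip_commute Dstar_mem Astar_mem f g by (metis complex_cnj_diff minus_diff_eq)
  then show ?thesis using boundary_form f g by simp
qed

lemma sharp_eq:
  assumes "x \<in> Hmp"
  shows "sharp Hmp Hpm p W x = - W x"
proof -
  let ?P = "\<lambda>V. (\<forall>x. x \<notin> Hmp \<longrightarrow> V x = 0) \<and> (\<forall>x\<in>Hmp. V x \<in> Hpm) \<and>
    (\<forall>f\<in>Hmp. \<forall>g\<in>Hmp. cnj (p g (W f)) = p f (V g))"
  define V where "V x = (if x \<in> Hmp then - W x else 0)" for x
  have V: "?P V"
    unfolding V_def using W_mem Hp.mem_uminus pairing_W_skew pair.minus_right by simp
  have uniq: "V' = V" if V': "?P V'" for V'
  proof
    fix g show "V' g = V g"
    proof (cases "g \<in> Hmp")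
      case True
      have "V' g - V g = 0"
      proof (rule pairing_nondegenerate_right)
        show "V' g - V g \<in> Hpm" using V V' True Hp.mem_diff by blast
        show "p f (V' g - V g) = 0" if "f \<in> Hmp" for f
          using V V' True that pair.diff_right[of f "V' g" "V g"] by simp
      qed
      then show ?thesis by simp
    qed (use V V' in auto)
  qed
  have "sharp Hmp Hpm p W = V" unfolding sharp_def using V uniq by (rule the_equality)
  then show ?thesis using assms unfolding V_def by simp
qed

lemma G_eq_0_on_domA: "f \<in> domA \<Longrightarrow> G f = 0"
proof (rule pairing_nondegenerate_left)
  assume f: "f \<in> domA"
  show "G f \<in> Hmp" using G_mem Astar_extends_A(1)[OF f] .
  show "p (G f) k = 0" if k: "k \<in> Hpm" for k
  proof -
    obtain g where g: "g \<in> Dstar" "k = W (G g)" using W_G_onto_Hpm[OF k] by blast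
    then show ?thesis
      using boundary_form[OF Astar_extends_A(1)[OF f] g(1)] Astar_extends_A(2)[OF f] Astar_ip[OF g(1) f]
      by simp
  qed
qed

lemma dom_eq_ker_G: "domA = {f \<in> Dstar. G f = 0}"
proof
  show "domA \<subseteq> {f \<in> Dstar. G f = 0}" using Astar_extends_A(1) G_eq_0_on_domA by blast
  show "{f \<in> Dstar. G f = 0} \<subseteq> domA"
  proof clarify
    fix f assume f: "f \<in> Dstar" and "G f = 0"
    then have "ipX (Astar f) g - ipX f (Astar g) = 0" if "g \<in> Dstar" for g
      using boundary_form[OF f that] pair.zero_left[OF W_mem[OF G_mem[OF that]]] by simp
    then show "f \<in> domA" using mem_dom_if_Astar_symmetric[OF f] by simp
  qed
qed

lemma graph_A_eq_ker_G: "graph domA A = {u \<in> graph Dstar Astar. (\<lambda>(f, h). G f) u = 0}"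
proof -
  have "graph domA A = {(f, Astar f) | f. f \<in> domA}"
    unfolding graph_def using Astar_extends_A(2) by force
  then show ?thesis unfolding graph_def using dom_eq_ker_G by auto
qed

lemma scaled_W_G_image:
  assumes c: "c \<noteq> 0"
  shows "(\<lambda>f. sc c (W (G f))) ` Dstar = Hpm"
proof
  show "(\<lambda>f. sc c (W (G f))) ` Dstar \<subseteq> Hpm" using Hp.mem_scale W_mem G_mem by blast
  show "Hpm \<subseteq> (\<lambda>f. sc c (W (G f))) ` Dstar"
  proof
    fix k assume "k \<in> Hpm"
    then obtain g where g: "g \<in> Dstar" "sc (inverse c) k = W (G g)"
      using W_G_onto_Hpm[OF Hp.mem_scale] by blast
    then have "k = sc c (W (G g))" using c by (metis scale_scale scale_one right_inverse)
    then show "k \<in> (\<lambda>f. sc c (W (G f))) ` Dstar" using g(1) by blast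
  qed
qed

lemma boundary_form_swapped:
  assumes c: "cmod c = 1" and f: "f \<in> Dstar" and g: "g \<in> Dstar"
  shows "ipX (Astar f) g - ipX f (Astar g)
    = cnj (p (- inv_into Hmp W (sc c (W (G g)))) (sc c (W (G f))))"
proof -
  have Gf: "G f \<in> Hmp" and Gg: "G g \<in> Hmp" using G_mem f g by auto
  have "inv_into Hmp W (sc c (W (G g))) = sc c (G g)"
    using W_scale[OF Gg] bij_betw_inv_into_left[OF W_bij Hm.mem_scale[OF Gg]] by simp
  then have "p (- inv_into Hmp W (sc c (W (G g)))) (sc c (W (G f))) = - ((cnj c * c) * p (G g) (W (G f)))"
    using pair.minus_left[OF Hm.mem_scale[OF Gg] Hp.mem_scale[OF W_mem[OF Gf]]]
      pair.scale_left[OF Gg Hp.mem_scale[OF W_mem[OF Gf]]] pair.scale_right[OF Gg W_mem[OF Gf]]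
    by simp
  also have "\<dots> = - p (G g) (W (G f))" using c by (simp add: cnj_mult_self)
  finally show ?thesis using pairing_W_skew[OF Gg Gf] boundary_form[OF f g] by simp
qed

lemma reduction_tuple_swapped:
  assumes c: "cmod c = 1"
  shows "reduction_tuple scX X ipX domA A sc Hpm ippm Hmp ipmp (\<lambda>a b. cnj (p b a))
    (\<lambda>f. sc c (W (G f))) (\<lambda>x. - inv_into Hmp W x)"
proof -
  have "lin_on scX sc Dstar (\<lambda>f. sc c (W (G f)))"
    unfolding lin_on_def using Dstar_subspace G_add G_scale W_add W_scale G_mem
    by (simp add: scale_right_distrib scale_left_commute)
  moreover have "lin_homeo sc Hpm ippm Hmp ipmp (\<lambda>x. - inv_into Hmp W x)"
    using lin_homeo_uminus[OF Hp.hilbert_carrier_axioms Hm.hilbert_carrier_axioms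
        lin_homeo_inv_into[OF Hm.hilbert_carrier_axioms Hp.hilbert_carrier_axioms W_homeo]] .
  moreover have "c \<noteq> 0" using c by auto
  ultimately show ?thesis
    using scaled_W_G_image boundary_form_swapped[OF c] unfolding reduction_tuple_def by blast
qed

lemma pairing_tendsto_left:
  assumes "\<And>n. x n \<in> Hmp" "y \<in> Hmp" "(\<lambda>n. ip_norm ipmp (x n - y)) \<longlonglongrightarrow> 0" "k \<in> Hpm"
  shows "(\<lambda>n. p (x n) k) \<longlonglongrightarrow> p y k"
proof -
  obtain C where C: "\<forall>x\<in>Hmp. \<forall>y\<in>Hpm. cmod (p x y) \<le> C * ip_norm ipmp x * ip_norm ippm y"
    using pairing_bounded by blast
  have "norm (p (x n) k - p y k) \<le> C * ip_norm ipmp (x n - y) * ip_norm ippm k" for n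
    using C[rule_format, OF Hm.mem_diff[OF assms(1)[of n] assms(2)] assms(4)]
      pair.diff_left[OF assms(1)[of n] assms(2,4)] by simp
  then have "\<forall>n. norm (p (x n) k - p y k) \<le> C * ip_norm ipmp (x n - y) * ip_norm ippm k" ..
  from Lim_null_comparison[OF always_eventually[OF this]
      tendsto_mult_left_zero[OF tendsto_mult_right_zero[OF assms(3)]]]
  show ?thesis by (rule LIM_zero_cancel)
qed

text \<open>On \<open>k = W (G g)\<close> the functional \<open>p (G f)\<close> is the boundary form against \<open>g\<close>, which is
 continuous in the graph norm of \<open>f\<close>.\<close>
lemma G_graph_limit:
  assumes f: "\<And>n. f n \<in> Dstar" and u: "u \<in> Dstar" and y: "y \<in> Hmp"
    and lim: "(\<lambda>n. ip_norm ipX (f n - u)) \<longlonglongrightarrow> 0" "(\<lambda>n. ip_norm ipX (Astar (f n) - Astar u)) \<longlonglongrightarrow> 0"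
      "(\<lambda>n. ip_norm ipmp (G (f n) - y)) \<longlonglongrightarrow> 0"
  shows "G u = y"
proof -
  have "G u - y = 0"
  proof (rule pairing_nondegenerate_left)
    show "G u - y \<in> Hmp" using Hm.mem_diff[OF G_mem[OF u] y] .
    fix k assume k: "k \<in> Hpm"
    obtain g where g: "g \<in> Dstar" "k = W (G g)" using W_G_onto_Hpm[OF k] by blast
    have "(\<lambda>n. ipX (Astar (f n)) g - ipX (f n) (Astar g)) \<longlonglongrightarrow> ipX (Astar u) g - ipX u (Astar g)"
      using Dstar_mem Astar_mem f g u lim
      by (intro tendsto_diff X.ip_tendsto_left) auto
    then have "(\<lambda>n. p (G (f n)) k) \<longlonglongrightarrow> p (G u) k"
      using boundary_form f g u by simp
    moreover have "(\<lambda>n. p (G (f n)) k) \<longlonglongrightarrow> p y k"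
      using pairing_tendsto_left[OF G_mem[OF f] y lim(3) k] .
    ultimately show "p (G u - y) k = 0"
      using LIMSEQ_unique pair.diff_left[OF G_mem[OF u] y k] by simp
  qed
  then show ?thesis by simp
qed

lemma G'_closed:
  "closed_op (X \<times> X) (\<lambda>u v. gr_norm ipX (fst u - fst v) (snd u - snd v))
    (graph Dstar Astar) Hmp (\<lambda>y z. ip_norm ipmp (y - z)) (\<lambda>(f, h). G f)"
  unfolding closed_op_def
proof (intro allI impI, elim conjE)
  fix s :: "nat \<Rightarrow> 'x \<times> 'x" and u :: "'x \<times> 'x" and y
  assume s: "\<forall>n. s n \<in> graph Dstar Astar" and u: "u \<in> X \<times> X" and y: "y \<in> Hmp"
    and su: "(\<lambda>n. gr_norm ipX (fst (s n) - fst u) (snd (s n) - snd u)) \<longlonglongrightarrow> 0"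
    and sy: "(\<lambda>n. ip_norm ipmp ((\<lambda>(f, h). G f) (s n) - y)) \<longlonglongrightarrow> 0"
  define f where "f n = fst (s n)" for n
  have "f n \<in> Dstar \<and> s n = (f n, Astar (f n))" for n
  proof -
    obtain g where "s n = (g, Astar g)" "g \<in> Dstar" using s unfolding graph_def by blast
    then show ?thesis unfolding f_def by simp
  qed
  then have f: "f n \<in> Dstar" "s n = (f n, Astar (f n))" for n by auto
  have "(\<lambda>n. gr_norm ipX (f n - fst u) (Astar (f n) - snd u)) \<longlonglongrightarrow> 0"
    using su f(2) by simp
  then have lim: "(\<lambda>n. ip_norm ipX (f n - fst u)) \<longlonglongrightarrow> 0" "(\<lambda>n. ip_norm ipX (Astar (f n) - snd u)) \<longlonglongrightarrow> 0"
    unfolding gr_norm_tendsto_0_iff by auto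
  then have u_graph: "fst u \<in> Dstar" "Astar (fst u) = snd u"
    using Astar_closed[OF f(1)] u by (auto simp: mem_Times_iff)
  then have "G (fst u) = y"
    using G_graph_limit[OF f(1) _ y] lim sy f(2) by simp
  then show "u \<in> graph Dstar Astar \<and> (\<lambda>(f, h). G f) u = y"
    using u_graph unfolding graph_def by (cases u) auto
qed

lemma pairing_G_pointwise_bounded:
  assumes k: "k \<in> Hpm"
  shows "\<exists>n::nat. \<forall>f\<in>Dstar. cmod (p (G f) k) \<le> real n * gr_norm ipX f (Astar f)"
proof -
  obtain g where g: "g \<in> Dstar" "k = W (G g)" using W_G_onto_Hpm[OF k] by blast
  have gX: "g \<in> X" and AgX: "Astar g \<in> X" using Dstar_mem Astar_mem g by auto
  define n where "n = nat \<lceil>ip_norm ipX g + ip_norm ipX (Astar g)\<rceil>"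
  have "cmod (p (G f) k) \<le> real n * gr_norm ipX f (Astar f)" if f: "f \<in> Dstar" for f
  proof -
    let ?w = "gr_norm ipX f (Astar f)"
    have fX: "f \<in> X" and AfX: "Astar f \<in> X" using Dstar_mem Astar_mem f by auto
    have w: "ip_norm ipX f \<le> ?w" "ip_norm ipX (Astar f) \<le> ?w"
      unfolding gr_norm_def by (simp_all add: real_sqrt_sum_squares_ge1 real_sqrt_sum_squares_ge2)
    have "cmod (p (G f) k) \<le> cmod (ipX (Astar f) g) + cmod (ipX f (Astar g))"
      using boundary_form[OF f g(1)] g(2) norm_triangle_ineq4 by metis
    also have "\<dots> \<le> ip_norm ipX (Astar f) * ip_norm ipX g + ip_norm ipX f * ip_norm ipX (Astar g)"
      using X.cauchy_schwarz[OF AfX gX] X.cauchy_schwarz[OF fX AgX] by simp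
    also have "\<dots> \<le> ?w * (ip_norm ipX g + ip_norm ipX (Astar g))"
      using w X.ip_norm_nonneg[OF gX] X.ip_norm_nonneg[OF AgX] by (simp add: distrib_left add_mono mult_right_mono)
    also have "\<dots> \<le> ?w * real n"
      unfolding n_def using w X.ip_norm_nonneg[OF fX] by (intro mult_left_mono real_nat_ceiling_ge) auto
    finally show ?thesis by (simp add: mult.commute)
  qed
  then show ?thesis by blast
qed

lemma G'_bounded:
  "bounded_op (graph Dstar Astar) (\<lambda>u. gr_norm ipX (fst u) (snd u)) (ip_norm ipmp) (\<lambda>(f, h). G f)"
proof -
  obtain C where C: "C \<ge> 0" "\<forall>x\<in>Hmp. \<forall>y\<in>Hpm. cmod (p x y) \<le> C * ip_norm ipmp x * ip_norm ippm y"
    using pairing_bounded by blast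
  obtain M where "M \<ge> 0"
    and M: "\<forall>f\<in>Dstar. \<forall>k\<in>Hpm. cmod (p (G f) k) \<le> M * gr_norm ipX f (Astar f) * ip_norm ippm k"
    using Hp.uniform_boundedness[of Dstar "\<lambda>f. p (G f)" "\<lambda>f. gr_norm ipX f (Astar f)"]
      pair.add_right pair.scale_right G_mem C(2) pairing_G_pointwise_bounded by blast
  have "ip_norm ipmp (G f) \<le> M * gr_norm ipX f (Astar f)" if "f \<in> Dstar" for f
    using Hmp_norm_le_pairing_bound[OF G_mem[OF that]] M that \<open>M \<ge> 0\<close> by (simp add: gr_norm_def)
  then show ?thesis unfolding bounded_op_def graph_def by auto
qed

end

theorem proposition5p6:
  fixes scX :: "complex \<Rightarrow> 'x::ab_group_add \<Rightarrow> 'x"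
    and X domA :: "'x set" and ipX :: "'x \<Rightarrow> 'x \<Rightarrow> complex" and A :: "'x \<Rightarrow> 'x"
    and sc :: "complex \<Rightarrow> 'h::ab_group_add \<Rightarrow> 'h"
    and H Hmp Hpm :: "'h set" and ipH ipmp ippm p :: "'h \<Rightarrow> 'h \<Rightarrow> complex"
    and G :: "'x \<Rightarrow> 'h" and W :: "'h \<Rightarrow> 'h"
  assumes "vector_space scX" and "vector_space sc"
    and "hilbert_space scX X ipX"
    and "cdd_symmetric scX X ipX domA A"
    and "mixed_duality sc H ipH Hmp ipmp Hpm ippm"
    and "is_H_pairing sc H ipH Hmp ipmp Hpm ippm p"
    and "reduction_tuple scX X ipX domA A sc Hmp ipmp Hpm ippm p G W"
  shows
    "let Dstar = adj_dom X ipX domA A; Astar = adj X ipX domA A;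
         G' = (\<lambda>(f, h). G f)
     in closed_op (X \<times> X) (\<lambda>u v. gr_norm ipX (fst u - fst v) (snd u - snd v))
            (graph Dstar Astar) Hmp (\<lambda>y z. ip_norm ipmp (y - z)) G'
      \<and> bounded_op (graph Dstar Astar) (\<lambda>u. gr_norm ipX (fst u) (snd u)) (ip_norm ipmp) G'
      \<and> (\<forall>c. cmod c = 1 \<longrightarrow>
           reduction_tuple scX X ipX domA A sc Hpm ippm Hmp ipmp (\<lambda>a b. cnj (p b a))
             (\<lambda>f. sc c (W (G f))) (\<lambda>x. - inv_into Hmp W x))
      \<and> graph domA A = {u \<in> graph Dstar Astar. G' u = 0}
      \<and> domA = {f \<in> Dstar. G f = 0}
      \<and> (\<forall>x\<in>Hmp. sharp Hmp Hpm p W x = - W x)"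
proof -
  interpret reduction_setting scX X ipX domA A sc H Hmp Hpm ipH ipmp ippm p G W
    using assms
    by (simp add: reduction_setting_def reduction_setting_axioms_def closed_symmetric_operator_def
        closed_symmetric_operator_axioms_def hilbert_carrier_def hilbert_carrier_axioms_def)
  show ?thesis
    unfolding Let_def
    using G'_closed G'_bounded reduction_tuple_swapped graph_A_eq_ker_G dom_eq_ker_G sharp_eq by blast
qed

end
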